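(* Let $G$ be a nilpotent Chernikov $p$-group whose top is an elementary abelian $p$-group and whose bottom is a single quasi-cyclic $p$-group $M$. Then $G\cong G_k\times H_l$ for some integers $k,l\ge0$, where $H_l$ is the elementary abelian $p$-group of rank $l$ and $G_k$ is the group generated by $M$ and $2k$ elements $\bar h_1,\dots,\bar h_{2k}$, each of order $p$ and commuting with all elements of $M$, whose commutators for $i<j$ are $[\bar h_i,\bar h_j]=a_1$ if $j=k+i$ and $[\bar h_i,\bar h_j]=0$ otherwise, $a_1$ being a fixed element of order $p$ of $M$.
   Context: A Chernikov $p$-group is an extension of a finite direct sum of quasi-cyclic $p$-groups (groups of type $p^\infty$; the bottom, which is the largest divisible abelian subgroup) by a finite $p$-group (the top). Groups are written additively and $[u,v]=u+v-u-v$. *)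

theory Defs
  imports Complex_Main "HOL-Algebra.Algebra"
begin

text \<open>Commutator, in the paper's convention [u,v] = u+v-u-v, written multiplicatively.\<close>
definition commutator :: "('a, 'b) monoid_scheme \<Rightarrow> 'a \<Rightarrow> 'a \<Rightarrow> 'a" where
  "commutator G u v = u \<otimes>\<^bsub>G\<^esub> v \<otimes>\<^bsub>G\<^esub> inv\<^bsub>G\<^esub> u \<otimes>\<^bsub>G\<^esub> inv\<^bsub>G\<^esub> v"

fun lower_central :: "('a, 'b) monoid_scheme \<Rightarrow> nat \<Rightarrow> 'a set" where
  "lower_central G 0 = carrier G"
| "lower_central G (Suc n) =
     generate G {commutator G x y | x y. x \<in> lower_central G n \<and> y \<in> carrier G}"

definition nilpotent_group :: "('a, 'b) monoid_scheme \<Rightarrow> bool" where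
  "nilpotent_group G \<longleftrightarrow> group G \<and> (\<exists>n. lower_central G n = {\<one>\<^bsub>G\<^esub>})"

definition prufer_group :: "nat \<Rightarrow> complex monoid" where
  "prufer_group p = \<lparr>carrier = {z. \<exists>n. z ^ (p ^ n) = 1}, monoid.mult = (*), one = 1\<rparr>"

definition quasi_cyclic_subgroup :: "nat \<Rightarrow> ('a, 'b) monoid_scheme \<Rightarrow> 'a set \<Rightarrow> bool" where
  "quasi_cyclic_subgroup p G M \<longleftrightarrow> subgroup M G \<and> G\<lparr>carrier := M\<rparr> \<cong> prufer_group p"

definition divisible_abelian_subgroup :: "('a, 'b) monoid_scheme \<Rightarrow> 'a set \<Rightarrow> bool" where
  "divisible_abelian_subgroup G D \<longleftrightarrow> subgroup D G
     \<and> (\<forall>x\<in>D. \<forall>y\<in>D. x \<otimes>\<^bsub>G\<^esub> y = y \<otimes>\<^bsub>G\<^esub> x)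
     \<and> (\<forall>x\<in>D. \<forall>n::nat. n > 0 \<longrightarrow> (\<exists>y\<in>D. y [^]\<^bsub>G\<^esub> n = x))"

definition is_bottom :: "('a, 'b) monoid_scheme \<Rightarrow> 'a set \<Rightarrow> bool" where
  "is_bottom G M \<longleftrightarrow> divisible_abelian_subgroup G M
     \<and> (\<forall>D. divisible_abelian_subgroup G D \<longrightarrow> D \<subseteq> M)"

definition elementary_abelian :: "nat \<Rightarrow> ('a, 'b) monoid_scheme \<Rightarrow> bool" where
  "elementary_abelian p H \<longleftrightarrow> comm_group H \<and> finite (carrier H)
     \<and> (\<forall>x\<in>carrier H. x [^]\<^bsub>H\<^esub> p = \<one>\<^bsub>H\<^esub>)"

definition elementary_abelian_rank :: "nat \<Rightarrow> nat \<Rightarrow> ('a, 'b) monoid_scheme \<Rightarrow> bool" where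
  "elementary_abelian_rank p l H \<longleftrightarrow> elementary_abelian p H \<and> card (carrier H) = p ^ l"

definition is_G_k :: "nat \<Rightarrow> nat \<Rightarrow> ('a, 'b) monoid_scheme \<Rightarrow> bool" where
  "is_G_k p k K \<longleftrightarrow> group K \<and> (\<exists>M h a.
      quasi_cyclic_subgroup p K M
    \<and> a \<in> M \<and> group.ord K a = p
    \<and> (\<forall>i\<in>{1..2*k}. h i \<in> carrier K \<and> group.ord K (h i) = p
                       \<and> (\<forall>m\<in>M. h i \<otimes>\<^bsub>K\<^esub> m = m \<otimes>\<^bsub>K\<^esub> h i))
    \<and> (\<forall>i\<in>{1..2*k}. \<forall>j\<in>{1..2*k}. i < j \<longrightarrow>
          commutator K (h i) (h j) = (if j = k + i then a else \<one>\<^bsub>K\<^esub>))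
    \<and> carrier K = generate K (M \<union> h ` {1..2*k}))"

end

theory Submission
  imports Defs
begin

text \<open>
  The quasi-cyclic bottom M is central: for g in G the map m \<mapsto> [m, g] is an endomorphism
  of M with divisible image, and a nontrivial divisible subgroup of Z(p^\<infinity>) is all of it, so a
  non-central M would survive in every term of the lower central series. As G/M is elementary
  abelian, commutators lie in M and have order dividing p, so they are powers of a fixed element
  a of order p: commutation is an alternating form on G/M with values in Z/p. Splitting off
  hyperbolic pairs (x, y) with [x, y] = a, by induction on the index of M, writes G = K C where
  K is generated by M and a symplectic family (a copy of G_k), C is the abelian centralizer of
  the family, and K \<inter> C \<subseteq> M. Finally C = M H with H generated by elements of order p that
  are independent modulo M, and G \<cong> K \<times> H.
\<close>

definition centralizer :: "('a, 'b) monoid_scheme \<Rightarrow> 'a set \<Rightarrow> 'a set" where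
  "centralizer G Y = {g \<in> carrier G. \<forall>y\<in>Y. g \<otimes>\<^bsub>G\<^esub> y = y \<otimes>\<^bsub>G\<^esub> g}"

context group begin

lemma inv_mult_cancel_left [simp]: "y \<in> carrier G \<Longrightarrow> z \<in> carrier G \<Longrightarrow> inv y \<otimes> (y \<otimes> z) = z"
  by (simp add: m_assoc[symmetric])

lemma mult_inv_cancel_left [simp]: "y \<in> carrier G \<Longrightarrow> z \<in> carrier G \<Longrightarrow> y \<otimes> (inv y \<otimes> z) = z"
  by (simp add: m_assoc[symmetric])

lemma generate_Un_generate:
  assumes A: "A \<subseteq> carrier G" and B: "B \<subseteq> carrier G"
  shows "generate G (generate G A \<union> B) = generate G (A \<union> B)"
proof
  have "generate G A \<union> B \<subseteq> generate G (A \<union> B)"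
    using mono_generate[of A "A \<union> B"] by (auto intro: generate.incl)
  then show "generate G (generate G A \<union> B) \<subseteq> generate G (A \<union> B)"
    by (rule generate_subgroup_incl) (use A B in \<open>auto intro: generate_is_subgroup\<close>)
next
  have "A \<union> B \<subseteq> generate G A \<union> B" by (auto intro: generate.incl)
  then show "generate G (A \<union> B) \<subseteq> generate G (generate G A \<union> B)"
    by (rule mono_generate)
qed

lemma generate_subgroup_eq: "subgroup S G \<Longrightarrow> generate G S = S"
  using generate_subgroup_incl[of S S] by (auto intro: generate.incl)

lemma subgroup_nat_pow_closed: "subgroup S G \<Longrightarrow> x \<in> S \<Longrightarrow> x [^] (n::nat) \<in> S"
  by (induct n) (auto simp: subgroup.one_closed subgroup.m_closed)

lemma commutator_closed [simp]: "x \<in> carrier G \<Longrightarrow> y \<in> carrier G \<Longrightarrow> commutator G x y \<in> carrier G"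
  unfolding commutator_def by simp

lemma commutator_eq_one_iff:
  assumes "u \<in> carrier G" "v \<in> carrier G"
  shows "commutator G u v = \<one> \<longleftrightarrow> u \<otimes> v = v \<otimes> u"
proof -
  have "commutator G u v = (u \<otimes> v) \<otimes> inv (v \<otimes> u)"
    unfolding commutator_def using assms by (simp add: inv_mult_group m_assoc)
  then show ?thesis using assms by (simp add: inv_solve_right')
qed

lemma subgroup_centralizer: assumes Y: "Y \<subseteq> carrier G" shows "subgroup (centralizer G Y) G"
proof (rule subgroupI)
  show "centralizer G Y \<subseteq> carrier G" unfolding centralizer_def by blast
  show "centralizer G Y \<noteq> {}" unfolding centralizer_def using Y by (auto intro!: exI[of _ \<one>])
next
  fix a assume a: "a \<in> centralizer G Y"
  have ac: "a \<in> carrier G" using a unfolding centralizer_def by blast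
  have "inv a \<otimes> y = y \<otimes> inv a" if y: "y \<in> Y" for y
  proof -
    have yc: "y \<in> carrier G" using y Y by blast
    have "a \<otimes> y = y \<otimes> a" using a y unfolding centralizer_def by blast
    then have "inv a \<otimes> (a \<otimes> y) \<otimes> inv a = inv a \<otimes> (y \<otimes> a) \<otimes> inv a" by simp
    then show ?thesis using ac yc by (simp add: m_assoc)
  qed
  then show "inv a \<in> centralizer G Y" using ac unfolding centralizer_def by blast
next
  fix a b assume a: "a \<in> centralizer G Y" and b: "b \<in> centralizer G Y"
  have ab: "a \<in> carrier G" "b \<in> carrier G" using a b unfolding centralizer_def by blast+
  have "a \<otimes> b \<otimes> y = y \<otimes> (a \<otimes> b)" if y: "y \<in> Y" for y
  proof -
    have yc: "y \<in> carrier G" using y Y by blast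
    have e: "a \<otimes> y = y \<otimes> a" "b \<otimes> y = y \<otimes> b" using a b y unfolding centralizer_def by blast+
    have "a \<otimes> b \<otimes> y = a \<otimes> (y \<otimes> b)" using ab yc e by (simp add: m_assoc)
    also have "\<dots> = y \<otimes> (a \<otimes> b)" using ab yc e by (simp add: m_assoc[symmetric])
    finally show ?thesis .
  qed
  then show "a \<otimes> b \<in> centralizer G Y" using ab unfolding centralizer_def by blast
qed

lemma commute_generate:
  assumes "c \<in> carrier G" "Y \<subseteq> carrier G" "\<forall>x\<in>Y. c \<otimes> x = x \<otimes> c" "y \<in> generate G Y"
  shows "c \<otimes> y = y \<otimes> c"
proof -
  have "generate G Y \<subseteq> centralizer G {c}"
    using assms by (intro generate_subgroup_incl subgroup_centralizer) (auto simp: centralizer_def)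
  then show ?thesis using assms unfolding centralizer_def by auto
qed

lemma prime_pow_in_subgroup:
  assumes S: "subgroup S G" and x: "x \<in> carrier G" and n: "Factorial_Ring.prime (n::nat)"
    and xn: "x [^] n \<in> S" and xj: "x [^] j \<in> S" and j: "0 < (j::nat)" "j < n"
  shows "x \<in> S"
proof -
  have "coprime n j" using n j by (intro prime_imp_coprime) (auto dest: dvd_imp_le)
  then obtain u v where uv: "j * u = n * v + 1"
    using bezout_nat[of j n] j by (auto simp: coprime_commute)
  have "(x [^] j) [^] u = (x [^] n) [^] v \<otimes> x"
    using x by (simp add: nat_pow_pow uv nat_pow_mult)
  then have "x = inv ((x [^] n) [^] v) \<otimes> (x [^] j) [^] u"
    using x by (simp add: m_assoc[symmetric])
  also have "\<dots> \<in> S"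
    using S xn xj by (simp add: subgroup.m_closed subgroup.m_inv_closed subgroup_nat_pow_closed)
  finally show ?thesis .
qed

definition normalizes :: "'a \<Rightarrow> 'a set \<Rightarrow> bool" where
  "normalizes x S \<longleftrightarrow> (\<forall>s\<in>S. x \<otimes> s \<otimes> inv x \<in> S \<and> inv x \<otimes> s \<otimes> x \<in> S)"

lemma normalizes_pow:
  assumes S: "subgroup S G" and x: "x \<in> carrier G" and nx: "normalizes x S" and s: "s \<in> S"
  shows "x [^] (i::nat) \<otimes> s \<otimes> inv (x [^] i) \<in> S"
  using s
proof (induct i arbitrary: s)
  case 0
  then show ?case using subgroup.mem_carrier[OF S] by simp
next
  case (Suc i)
  have sc: "s \<in> carrier G" by (rule subgroup.mem_carrier[OF S Suc.prems])
  have "x [^] Suc i \<otimes> s \<otimes> inv (x [^] Suc i) = x [^] i \<otimes> (x \<otimes> s \<otimes> inv x) \<otimes> inv (x [^] i)"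
    using x sc by (simp only: nat_pow_Suc inv_mult_group m_assoc m_closed inv_closed nat_pow_closed)
  also have "\<dots> \<in> S" using Suc nx unfolding normalizes_def by blast
  finally show ?case .
qed

lemma subgroup_normalizing_products:
  assumes S: "subgroup S G" and x: "x \<in> carrier G" and n: "1 < (n::nat)" and xn: "x [^] n \<in> S"
    and nx: "normalizes x S"
  shows "subgroup {s \<otimes> x [^] j | s j. s \<in> S \<and> j < n} G" (is "subgroup ?E G")
proof -
  have Sc: "\<And>s. s \<in> S \<Longrightarrow> s \<in> carrier G" by (rule subgroup.mem_carrier[OF S])
  note conj = normalizes_pow[OF S x nx]
  show ?thesis
  proof (rule subgroupI)
    show "?E \<subseteq> carrier G" using Sc x by auto
    show "?E \<noteq> {}" using S n subgroup.one_closed by fastforce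
  next
    fix a assume "a \<in> ?E"
    then obtain s i where a: "a = s \<otimes> x [^] i" "s \<in> S" "i < n" by auto
    have sc: "s \<in> carrier G" using a Sc by auto
    have "x [^] (n - i) \<otimes> x [^] i = x [^] n" using x a by (simp add: nat_pow_mult)
    then have "inv (x [^] i) = inv (x [^] n) \<otimes> x [^] (n - i)"
      using x by (metis inv_solve_left' inv_solve_right' m_closed nat_pow_closed inv_closed)
    then have "inv a = (inv (x [^] n) \<otimes> (x [^] (n - i) \<otimes> inv s \<otimes> inv (x [^] (n - i)))) \<otimes> x [^] (n - i)"
      using a x sc by (simp add: inv_mult_group m_assoc)
    moreover have "inv (x [^] n) \<otimes> (x [^] (n - i) \<otimes> inv s \<otimes> inv (x [^] (n - i))) \<in> S"
      using S xn a conj by (simp add: subgroup.m_closed subgroup.m_inv_closed)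
    moreover have "inv a \<in> ?E" if "i = 0"
      using that a S sc by (auto intro!: exI[of _ "inv s"] exI[of _ 0] subgroup.m_inv_closed n)
    ultimately show "inv a \<in> ?E" using a by (cases "i = 0") (auto intro!: exI[of _ "n - i"])
  next
    fix a b assume "a \<in> ?E" "b \<in> ?E"
    then obtain s i t j where ab: "a = s \<otimes> x [^] i" "s \<in> S" "i < n" "b = t \<otimes> x [^] j" "t \<in> S" "j < n"
      by auto
    have sc: "s \<in> carrier G" "t \<in> carrier G" using ab Sc by auto
    have "i + j = n * ((i + j) div n) + (i + j) mod n" by simp
    then have "x [^] i \<otimes> x [^] j = (x [^] n) [^] ((i + j) div n) \<otimes> x [^] ((i + j) mod n)"
      using x by (metis nat_pow_mult nat_pow_pow)
    moreover have "a \<otimes> b = s \<otimes> (x [^] i \<otimes> t \<otimes> inv (x [^] i)) \<otimes> (x [^] i \<otimes> x [^] j)"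
      using sc x ab by (simp add: m_assoc)
    ultimately have "a \<otimes> b = (s \<otimes> (x [^] i \<otimes> t \<otimes> inv (x [^] i)) \<otimes> (x [^] n) [^] ((i + j) div n))
        \<otimes> x [^] ((i + j) mod n)"
      using sc x by (simp add: m_assoc)
    moreover have "s \<otimes> (x [^] i \<otimes> t \<otimes> inv (x [^] i)) \<otimes> (x [^] n) [^] ((i + j) div n) \<in> S"
      using S ab xn conj by (simp add: subgroup.m_closed subgroup_nat_pow_closed)
    ultimately show "a \<otimes> b \<in> ?E" using n by force
  qed
qed

lemma generate_insert_normalizing:
  assumes S: "subgroup S G" and x: "x \<in> carrier G" and n: "1 < (n::nat)" and xn: "x [^] n \<in> S"
    and nx: "normalizes x S"
  shows "generate G (S \<union> {x}) = {s \<otimes> x [^] j | s j. s \<in> S \<and> j < n}"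
proof (rule generateI[symmetric, OF subgroup_normalizing_products[OF assms]])
  show "S \<union> {x} \<subseteq> {s \<otimes> x [^] j | s j. s \<in> S \<and> j < n}"
  proof
    fix y assume "y \<in> S \<union> {x}"
    then show "y \<in> {s \<otimes> x [^] j | s j. s \<in> S \<and> j < n}"
    proof
      assume "y \<in> S"
      then show ?thesis using subgroup.mem_carrier[OF S] n by (auto intro!: exI[of _ y] exI[of _ 0])
    next
      assume "y \<in> {x}"
      then show ?thesis using x n S subgroup.one_closed by (auto intro!: exI[of _ "\<one>"] exI[of _ 1])
    qed
  qed
next
  fix K assume K: "subgroup K G" "S \<union> {x} \<subseteq> K"
  then show "{s \<otimes> x [^] j | s j. s \<in> S \<and> j < n} \<subseteq> K"
    using subgroup_nat_pow_closed subgroup.m_closed by fastforce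
qed

lemma generate_insert_normalizing_unique:
  assumes S: "subgroup S G" and x: "x \<in> carrier G" and n: "Factorial_Ring.prime (n::nat)"
    and xn: "x [^] n \<in> S" and xS: "x \<notin> S" and st: "s \<in> S" "t \<in> S" and ij: "i < n" "j < n"
    and eq: "s \<otimes> x [^] i = t \<otimes> x [^] j"
  shows "i = j \<and> s = t"
proof -
  have Sc: "s \<in> carrier G" "t \<in> carrier G" using subgroup.mem_carrier[OF S] st by auto
  have key: "i = j" if le: "i \<le> j" and eq: "s \<otimes> x [^] i = t \<otimes> x [^] j"
    and st: "s \<in> S" "t \<in> S" "j < n" for s t i j
  proof (rule ccontr)
    assume "i \<noteq> j"
    have Sc: "s \<in> carrier G" "t \<in> carrier G" using subgroup.mem_carrier[OF S] st by auto
    have "x [^] j = x [^] (j - i) \<otimes> x [^] i" using le x by (simp add: nat_pow_mult)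
    then have "s = t \<otimes> x [^] (j - i)" using eq x Sc by (simp add: m_assoc[symmetric])
    then have "x [^] (j - i) = inv t \<otimes> s" using x Sc by simp
    then have "x [^] (j - i) \<in> S" using S st by (metis subgroup.m_closed subgroup.m_inv_closed)
    then have "x \<in> S" using prime_pow_in_subgroup[OF S x n xn, of "j - i"] le \<open>i \<noteq> j\<close> st by auto
    then show False using xS by simp
  qed
  have "i = j" using key[of i j s t] key[of j i t s] eq st ij by (cases "i \<le> j") auto
  then show ?thesis using eq x Sc by simp
qed

lemma card_generate_insert_normalizing:
  assumes S: "subgroup S G" and x: "x \<in> carrier G" and n: "Factorial_Ring.prime (n::nat)"
    and xn: "x [^] n \<in> S" and nx: "normalizes x S" and xS: "x \<notin> S" and fin: "finite S"
  shows "finite (generate G (S \<union> {x}))" "card (generate G (S \<union> {x})) = n * card S"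
proof -
  have "generate G (S \<union> {x}) = (\<lambda>(s, j). s \<otimes> x [^] j) ` (S \<times> {..<n})"
    using generate_insert_normalizing[OF S x _ xn nx] prime_gt_1_nat[OF n] by auto
  moreover have "inj_on (\<lambda>(s, j). s \<otimes> x [^] j) (S \<times> {..<n})"
    by (rule inj_onI) (use generate_insert_normalizing_unique[OF S x n xn xS] in auto)
  ultimately show "finite (generate G (S \<union> {x}))" "card (generate G (S \<union> {x})) = n * card S"
    using fin by (simp_all add: card_image card_cartesian_product)
qed

lemma generate_insert_normalizing_inter:
  assumes H: "subgroup H G" and T: "subgroup T G" "H \<subseteq> T" and r: "r \<in> carrier G" "r \<notin> T"
    and n: "Factorial_Ring.prime (n::nat)" and rn: "r [^] n \<in> H" and nr: "normalizes r H"
  shows "T \<inter> generate G (H \<union> {r}) = H"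
proof
  show "T \<inter> generate G (H \<union> {r}) \<subseteq> H"
  proof
    fix z assume z: "z \<in> T \<inter> generate G (H \<union> {r})"
    then obtain s j where sj: "s \<in> H" "j < n" "z = s \<otimes> r [^] j"
      using generate_insert_normalizing[OF H r(1) prime_gt_1_nat[OF n] rn nr] by blast
    have sc: "s \<in> carrier G" using sj subgroup.mem_carrier[OF H] by blast
    have "j = 0"
    proof (rule ccontr)
      assume "j \<noteq> 0"
      have "r [^] j = inv s \<otimes> z" using sj sc r by (simp add: m_assoc[symmetric])
      also have "\<dots> \<in> T" using subgroup.m_closed[OF T(1)] subgroup.m_inv_closed[OF H sj(1)] T(2) z by blast
      finally have "r \<in> T"
        using prime_pow_in_subgroup[OF T(1) r(1) n _ _ \<open>j \<noteq> 0\<close>[unfolded neq0_conv] sj(2)] rn T(2) by blast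
      then show False using r by simp
    qed
    then show "z \<in> H" using sj sc by simp
  qed
  show "H \<subseteq> T \<inter> generate G (H \<union> {r})" using T(2) by (auto intro: generate.incl)
qed

lemma normalizes_commuting:
  assumes r: "r \<in> carrier G" and H: "H \<subseteq> carrier G" and comm: "\<forall>s\<in>H. r \<otimes> s = s \<otimes> r"
  shows "normalizes r H"
  unfolding normalizes_def
proof
  fix s assume s: "s \<in> H"
  have sc: "s \<in> carrier G" using s H by blast
  have e: "r \<otimes> s = s \<otimes> r" using comm s by blast
  have "r \<otimes> s \<otimes> inv r = s" using e r sc by (simp add: m_assoc)
  moreover have "inv r \<otimes> s \<otimes> r = s" using e[symmetric] r sc by (simp add: m_assoc)
  ultimately show "r \<otimes> s \<otimes> inv r \<in> H \<and> inv r \<otimes> s \<otimes> r \<in> H" using s by simp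
qed

lemma ord_subgroup:
  assumes S: "subgroup S G" and x: "x \<in> S"
  shows "group.ord (G\<lparr>carrier := S\<rparr>) x = ord x"
proof -
  have "\<And>n::nat. x [^]\<^bsub>G\<lparr>carrier := S\<rparr>\<^esub> n = x [^] n" using nat_pow_consistent by simp
  then show ?thesis unfolding group.ord_def[OF subgroup_imp_group[OF S]] ord_def by simp
qed

lemma subgroup_generated_subgroup_eq: "subgroup S G \<Longrightarrow> subgroup_generated G S = G\<lparr>carrier := S\<rparr>"
  unfolding subgroup_generated_def using subgroup.subset generate_subgroup_eq by (metis Int_absorb1)


lemma iso_internal_direct_product:
  assumes K: "subgroup K G" and H: "subgroup H G" and KH: "K \<inter> H = {\<one>}" "K <#> H = carrier G"
    and comm: "\<forall>x\<in>K. \<forall>y\<in>H. x \<otimes> y = y \<otimes> x"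
  shows "G \<cong> G\<lparr>carrier := K\<rparr> \<times>\<times> G\<lparr>carrier := H\<rparr>"
proof -
  interpret group_disjoint_sum G K H
    unfolding group_disjoint_sum_def using is_group K H by blast
  have "(\<lambda>(x, y). x \<otimes> y) \<in> iso (G\<lparr>carrier := K\<rparr> \<times>\<times> G\<lparr>carrier := H\<rparr>) G"
    using iso_group_mul_alt KH comm subgroup_generated_subgroup_eq[OF K] subgroup_generated_subgroup_eq[OF H]
    by simp
  then show ?thesis
    using group.iso_sym[OF DirProd_group[OF subgroup_imp_group[OF K] subgroup_imp_group[OF H]]]
    unfolding is_iso_def by blast
qed

end

section \<open>Commutator calculus in class two\<close>

locale central_commutators = group G for G (structure) +
  fixes Z
  assumes centre_subset: "Z \<subseteq> carrier G"
    and central: "\<And>z g. z \<in> Z \<Longrightarrow> g \<in> carrier G \<Longrightarrow> z \<otimes> g = g \<otimes> z"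
    and commutator_in_centre: "\<And>x y. x \<in> carrier G \<Longrightarrow> y \<in> carrier G \<Longrightarrow> commutator G x y \<in> Z"
begin

abbreviation cm where "cm x y \<equiv> commutator G x y"

lemma commutator_eqI:
  assumes "u \<in> carrier G" "x \<in> carrier G" "c \<in> carrier G" "u \<otimes> x = c \<otimes> x \<otimes> u"
  shows "cm u x = c"
  using assms unfolding commutator_def by (simp add: m_assoc)

lemma mult_commute_commutator:
  assumes "u \<in> carrier G" "v \<in> carrier G"
  shows "u \<otimes> v = cm u v \<otimes> v \<otimes> u"
  using assms unfolding commutator_def by (simp add: m_assoc)

lemma commutator_commute:
  "u \<in> carrier G \<Longrightarrow> v \<in> carrier G \<Longrightarrow> g \<in> carrier G \<Longrightarrow> cm u v \<otimes> g = g \<otimes> cm u v"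
  using central commutator_in_centre by blast

lemma commutator_mult_right:
  assumes u: "u \<in> carrier G" and v: "v \<in> carrier G" and w: "w \<in> carrier G"
  shows "cm u (v \<otimes> w) = cm u v \<otimes> cm u w"
proof (rule commutator_eqI)
  have "u \<otimes> (v \<otimes> w) = (u \<otimes> v) \<otimes> w" using assms by (simp add: m_assoc)
  also have "\<dots> = cm u v \<otimes> v \<otimes> (u \<otimes> w)"
    using assms by (simp add: mult_commute_commutator[OF u v] m_assoc)
  also have "\<dots> = cm u v \<otimes> (v \<otimes> cm u w) \<otimes> w \<otimes> u"
    using assms by (simp add: mult_commute_commutator[OF u w] m_assoc)
  also have "\<dots> = cm u v \<otimes> (cm u w \<otimes> v) \<otimes> w \<otimes> u"
    using assms commutator_commute[OF u w v] by simp
  also have "\<dots> = cm u v \<otimes> cm u w \<otimes> (v \<otimes> w) \<otimes> u"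
    using assms by (simp add: m_assoc)
  finally show "u \<otimes> (v \<otimes> w) = cm u v \<otimes> cm u w \<otimes> (v \<otimes> w) \<otimes> u" .
qed (use assms in auto)

lemma commutator_mult_left:
  assumes u: "u \<in> carrier G" and v: "v \<in> carrier G" and w: "w \<in> carrier G"
  shows "cm (u \<otimes> v) w = cm u w \<otimes> cm v w"
proof (rule commutator_eqI)
  have "u \<otimes> v \<otimes> w = (u \<otimes> cm v w) \<otimes> w \<otimes> v"
    using assms by (simp add: mult_commute_commutator[OF v w] m_assoc)
  also have "\<dots> = cm v w \<otimes> (u \<otimes> w) \<otimes> v"
    using assms commutator_commute[OF v w u] by (simp add: m_assoc[symmetric])
  also have "\<dots> = cm v w \<otimes> cm u w \<otimes> w \<otimes> u \<otimes> v"
    using assms by (simp add: mult_commute_commutator[OF u w] m_assoc)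
  also have "\<dots> = cm u w \<otimes> cm v w \<otimes> w \<otimes> (u \<otimes> v)"
    using assms commutator_commute[OF v w, of "cm u w"] by (simp add: m_assoc[symmetric])
  finally show "u \<otimes> v \<otimes> w = cm u w \<otimes> cm v w \<otimes> w \<otimes> (u \<otimes> v)" .
qed (use assms in auto)

lemma commutator_swap:
  assumes u: "u \<in> carrier G" and v: "v \<in> carrier G"
  shows "cm v u = inv (cm u v)"
proof (rule commutator_eqI)
  show "v \<otimes> u = inv (cm u v) \<otimes> u \<otimes> v"
    using assms by (simp add: m_assoc mult_commute_commutator[OF u v])
qed (use assms in auto)

lemma commutator_pow_right: "u \<in> carrier G \<Longrightarrow> v \<in> carrier G \<Longrightarrow> cm u (v [^] (n::nat)) = cm u v [^] n"
  by (induct n) (simp_all add: commutator_eq_one_iff commutator_mult_right)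

lemma commutator_pow_left: "u \<in> carrier G \<Longrightarrow> v \<in> carrier G \<Longrightarrow> cm (u [^] (n::nat)) v = cm u v [^] n"
  by (induct n) (simp_all add: commutator_eq_one_iff commutator_mult_left)

lemma commutator_self: "u \<in> carrier G \<Longrightarrow> cm u u = \<one>"
  by (simp add: commutator_eq_one_iff)

lemma commutator_centre_left: "z \<in> Z \<Longrightarrow> u \<in> carrier G \<Longrightarrow> cm z u = \<one>"
  using centre_subset central commutator_eq_one_iff by auto

lemma commutator_centre_right: "z \<in> Z \<Longrightarrow> u \<in> carrier G \<Longrightarrow> cm u z = \<one>"
  using centre_subset central commutator_eq_one_iff by auto

end

section \<open>The quasi-cyclic bottom is central\<close>

locale prufer_subgroup = group G for G (structure) +
  fixes p M f
  assumes prime_p: "Factorial_Ring.prime (p::nat)"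
    and subgroup_M: "subgroup M G"
    and iso_f: "f \<in> iso (G\<lparr>carrier := M\<rparr>) (prufer_group p)"
begin

abbreviation Omega :: "nat \<Rightarrow> 'a set" where
  "Omega n \<equiv> {m \<in> M. m [^] (p ^ n) = \<one>}"

lemma p_gt_1: "1 < p"
  using prime_p prime_gt_1_nat by blast

lemma M_carrier: "m \<in> M \<Longrightarrow> m \<in> carrier G"
  by (rule subgroup.mem_carrier[OF subgroup_M])

lemma f_mult: "x \<in> M \<Longrightarrow> y \<in> M \<Longrightarrow> f (x \<otimes> y) = f x * f y"
  using iso_f unfolding iso_def hom_def prufer_group_def by auto

lemma f_bij: "bij_betw f M {z. \<exists>n. z ^ (p ^ n) = 1}"
  using iso_f unfolding iso_def prufer_group_def by auto

lemma f_inj: "inj_on f M"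
  using f_bij bij_betw_def by blast

lemma f_one: "f \<one> = 1"
proof -
  have one: "\<one> \<in> M" by (rule subgroup.one_closed[OF subgroup_M])
  then obtain n where "f \<one> ^ (p ^ n) = 1" using f_bij unfolding bij_betw_def by blast
  then have "f \<one> \<noteq> 0" using p_gt_1 by (auto simp: zero_power)
  moreover have "f \<one> = f \<one> * f \<one>" using f_mult[OF one one] by simp
  ultimately show ?thesis by (metis mult_cancel_left1)
qed

lemma f_pow: "x \<in> M \<Longrightarrow> f (x [^] (n::nat)) = f x ^ n"
  by (induct n) (simp_all add: f_one f_mult subgroup_nat_pow_closed[OF subgroup_M])

lemma f_eq_one_iff: "x \<in> M \<Longrightarrow> f x = 1 \<longleftrightarrow> x = \<one>"
  using f_inj f_one subgroup.one_closed[OF subgroup_M] by (metis inj_onD)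

lemma Omega_iff: "m \<in> Omega n \<longleftrightarrow> m \<in> M \<and> f m ^ (p ^ n) = 1"
  using f_eq_one_iff[of "m [^] (p ^ n)"] f_pow[of m "p ^ n"]
    subgroup_nat_pow_closed[OF subgroup_M, of m "p ^ n"] by auto

lemma M_p_torsion: "m \<in> M \<Longrightarrow> \<exists>n. m [^] (p ^ n) = \<one>"
  using f_bij Omega_iff unfolding bij_betw_def by blast

text \<open>Omega n embeds into the complex (p^n)-th roots of unity.\<close>

lemma finite_Omega: "finite (Omega n)" and card_Omega_le: "card (Omega n) \<le> p ^ n"
proof -
  let ?R = "{z::complex. z ^ (p ^ n) = 1}"
  have pn: "0 < p ^ n" using p_gt_1 by simp
  have cR: "card ?R = p ^ n" by (rule card_roots_unity_eq[OF pn])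
  then have fR: "finite ?R" using pn card_ge_0_finite[of ?R] by simp
  have sub: "f ` Omega n \<subseteq> ?R"
  proof
    fix z assume "z \<in> f ` Omega n"
    then obtain m where "m \<in> Omega n" "z = f m" by blast
    then show "z \<in> ?R" using Omega_iff[of m n] by simp
  qed
  have inj: "inj_on f (Omega n)" by (rule inj_on_subset[OF f_inj]) blast
  show "finite (Omega n)" using finite_imageD[OF finite_subset[OF sub fR] inj] .
  show "card (Omega n) \<le> p ^ n" using card_mono[OF fR sub] card_image[OF inj] cR by simp
qed

lemma exists_order_p: "\<exists>a\<in>M. a [^] p = \<one> \<and> a \<noteq> \<one>"
proof -
  let ?R = "{z::complex. z ^ p = 1}"
  have "card ?R = p" using card_roots_unity_eq p_gt_1 by simp
  then have "\<not> ?R \<subseteq> {1}" using p_gt_1 card_mono[of "{1::complex}" ?R] by auto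
  then obtain z :: complex where z: "z ^ p = 1" "z \<noteq> 1" by blast
  then have "z \<in> {z. \<exists>n. z ^ (p ^ n) = 1}" by (auto intro!: exI[of _ 1])
  then obtain a where a: "a \<in> M" "f a = z" using f_bij unfolding bij_betw_def by force
  then have "a \<in> Omega 1" using Omega_iff[of a 1] z by simp
  then show ?thesis using a z f_one by auto
qed

lemma cyclic_Omega_subset:
  assumes w: "w \<in> M" and ord_w: "ord w = p ^ n"
  shows "Omega n \<subseteq> (\<lambda>i. w [^] i) ` {0 .. ord w - 1}"
proof -
  let ?A = "(\<lambda>i. w [^] i) ` {0 .. ord w - 1}"
  have wc: "w \<in> carrier G" using w M_carrier by blast
  have cA: "card ?A = p ^ n"
    using card_image[OF ord_inj[OF wc]] ord_w p_gt_1 by simp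
  have "(w [^] i) [^] (p ^ n) = \<one>" for i :: nat
    using wc ord_w by (simp add: nat_pow_pow pow_eq_id)
  then have AO: "?A \<subseteq> Omega n"
    using w subgroup_nat_pow_closed[OF subgroup_M] by auto
  then have "?A = Omega n"
    using card_subset_eq[OF finite_Omega AO] cA card_Omega_le[of n] card_mono[OF finite_Omega AO] by simp
  then show ?thesis by simp
qed

lemma Omega_1_powers:
  assumes a: "a \<in> M" "a [^] p = \<one>" "a \<noteq> \<one>" and m: "m \<in> M" "m [^] p = \<one>"
  shows "\<exists>t<p. m = a [^] t"
proof -
  have ac: "a \<in> carrier G" using a M_carrier by blast
  have "ord a dvd p" using pow_eq_id[OF ac] a by blast
  moreover have "ord a \<noteq> 1" using ord_eq_1[OF ac] a by simp
  ultimately have oa: "ord a = p ^ 1" using prime_p by (metis prime_nat_iff power_one_right)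
  have "m \<in> Omega 1" using m by simp
  then obtain t where "t \<in> {0 .. ord a - 1}" "m = a [^] t" using cyclic_Omega_subset[OF a(1) oa] by blast
  then show ?thesis using oa p_gt_1 by (intro exI[of _ t]) auto
qed

end

locale nilpotent_prufer = prufer_subgroup +
  assumes normal_M: "M \<lhd> G"
    and M_comm: "\<And>x y. x \<in> M \<Longrightarrow> y \<in> M \<Longrightarrow> x \<otimes> y = y \<otimes> x"
    and M_divisible: "\<forall>x\<in>M. \<forall>n::nat. n > 0 \<longrightarrow> (\<exists>y\<in>M. y [^] n = x)"
    and nilpotent: "\<exists>n. lower_central G n = {\<one>}"
begin

text \<open>A nontrivial divisible part of the quasi-cyclic group is all of it: a p^N-th root of
  a nontrivial element has order exceeding p^N, so a suitable power of it generates Omega N.\<close>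

lemma divisible_subset_eq:
  assumes DM: "D \<subseteq> M" and Dpow: "\<And>y k. y \<in> D \<Longrightarrow> y [^] (k::nat) \<in> D"
    and Ddiv: "\<And>y n. y \<in> D \<Longrightarrow> 0 < (n::nat) \<Longrightarrow> \<exists>z\<in>D. z [^] n = y"
    and d: "d \<in> D" "d \<noteq> \<one>"
  shows "M \<subseteq> D"
proof
  fix m assume m: "m \<in> M"
  obtain N where N: "m [^] (p ^ N) = \<one>" using M_p_torsion[OF m] by blast
  obtain N0 where N0: "d [^] (p ^ N0) = \<one>" using M_p_torsion d DM by blast
  have pN: "0 < p ^ N" using p_gt_1 by simp
  obtain z where z: "z \<in> D" "z [^] (p ^ N) = d" using Ddiv[OF d(1) pN] by blast
  have zc: "z \<in> carrier G" using z DM M_carrier by blast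
  have "z [^] (p ^ (N + N0)) = (z [^] (p ^ N)) [^] (p ^ N0)" using zc by (simp add: power_add nat_pow_pow)
  then have "z [^] (p ^ (N + N0)) = \<one>" using z N0 by simp
  then have "ord z dvd p ^ (N + N0)" using pow_eq_id[OF zc] by blast
  then obtain e where e: "ord z = p ^ e" using divides_primepow_nat[OF prime_p] by blast
  have eN: "N < e"
  proof (rule ccontr)
    assume "\<not> N < e"
    then have "z [^] (p ^ N) = \<one>" using e pow_eq_id[OF zc] by (simp add: le_imp_power_dvd)
    then show False using z d by simp
  qed
  define w where "w = z [^] (p ^ (e - N))"
  have wD: "w \<in> D" unfolding w_def using Dpow z by blast
  have pe: "p ^ e = p ^ (e - N) * p ^ N" using eN by (simp add: power_add[symmetric])
  have "ord w = ord z div p ^ (e - N)"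
    unfolding w_def using e pe p_gt_1 by (intro ord_pow[OF zc]) simp_all
  then have "ord w = p ^ N" using e pe p_gt_1 by simp
  then have "m \<in> (\<lambda>i. w [^] i) ` {0 .. ord w - 1}"
    using cyclic_Omega_subset wD DM m N by blast
  then show "m \<in> D" using wD Dpow by blast
qed

definition comm_map :: "'a \<Rightarrow> 'a \<Rightarrow> 'a" where
  "comm_map x m = commutator G m x"

lemma comm_map_eq: "x \<in> carrier G \<Longrightarrow> m \<in> M \<Longrightarrow> comm_map x m = m \<otimes> (x \<otimes> inv m \<otimes> inv x)"
  unfolding comm_map_def commutator_def using M_carrier by (simp add: m_assoc)

lemma comm_map_closed: "x \<in> carrier G \<Longrightarrow> m \<in> M \<Longrightarrow> comm_map x m \<in> M"
  using comm_map_eq normal.inv_op_closed2[OF normal_M]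
    subgroup.m_inv_closed[OF subgroup_M] subgroup.m_closed[OF subgroup_M] by simp

lemma comm_map_mult:
  assumes x: "x \<in> carrier G" and m: "m1 \<in> M" "m2 \<in> M"
  shows "comm_map x (m1 \<otimes> m2) = comm_map x m1 \<otimes> comm_map x m2"
proof -
  define c1 where "c1 = x \<otimes> inv m1 \<otimes> inv x"
  define c2 where "c2 = x \<otimes> inv m2 \<otimes> inv x"
  have cM: "c1 \<in> M" "c2 \<in> M"
    unfolding c1_def c2_def using normal.inv_op_closed2[OF normal_M] x m subgroup.m_inv_closed[OF subgroup_M]
    by auto
  have mc: "m1 \<in> carrier G" "m2 \<in> carrier G" "c1 \<in> carrier G" "c2 \<in> carrier G"
    using m cM M_carrier by auto
  have "x \<otimes> inv (m1 \<otimes> m2) \<otimes> inv x = c2 \<otimes> c1"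
    unfolding c1_def c2_def using x mc by (simp add: inv_mult_group m_assoc)
  then have "comm_map x (m1 \<otimes> m2) = m1 \<otimes> ((m2 \<otimes> c2) \<otimes> c1)"
    using comm_map_eq[OF x subgroup.m_closed[OF subgroup_M m]] mc by (simp add: m_assoc)
  also have "(m2 \<otimes> c2) \<otimes> c1 = c1 \<otimes> (m2 \<otimes> c2)"
    using M_comm subgroup.m_closed[OF subgroup_M] m cM by blast
  also have "m1 \<otimes> (c1 \<otimes> (m2 \<otimes> c2)) = comm_map x m1 \<otimes> comm_map x m2"
    using comm_map_eq x m mc unfolding c1_def c2_def by (simp add: m_assoc)
  finally show ?thesis .
qed

lemma comm_map_pow: "x \<in> carrier G \<Longrightarrow> m \<in> M \<Longrightarrow> comm_map x (m [^] (n::nat)) = comm_map x m [^] n"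
proof (induct n)
  case 0
  then show ?case by (simp add: comm_map_def commutator_def)
next
  case (Suc n)
  then show ?case by (simp add: comm_map_mult subgroup_nat_pow_closed[OF subgroup_M])
qed

lemma comm_map_iter_lower_central:
  "x \<in> carrier G \<Longrightarrow> m \<in> M \<Longrightarrow> (comm_map x ^^ n) m \<in> lower_central G n"
proof (induct n)
  case 0
  then show ?case using M_carrier by simp
next
  case (Suc n)
  have "(comm_map x ^^ n) m \<in> M"
    using Suc.prems by (induct n) (simp_all add: comm_map_closed)
  then show ?case using Suc by (auto simp: comm_map_def intro!: generate.incl)
qed

lemma M_subset_comm_map_image:
  assumes g: "g \<in> carrier G" and d: "d \<in> comm_map g ` M" "d \<noteq> \<one>"
  shows "M \<subseteq> comm_map g ` M"
proof (rule divisible_subset_eq[OF _ _ _ d])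
  show "comm_map g ` M \<subseteq> M" using comm_map_closed g by blast
  show "y [^] (k::nat) \<in> comm_map g ` M" if y: "y \<in> comm_map g ` M" for y k
  proof -
    obtain m' where "m' \<in> M" "y = comm_map g m'" using y by blast
    then show ?thesis using comm_map_pow[OF g] subgroup_nat_pow_closed[OF subgroup_M] by (metis image_eqI)
  qed
  show "\<exists>z\<in>comm_map g ` M. z [^] n = y" if y: "y \<in> comm_map g ` M" and n: "0 < (n::nat)" for y n
  proof -
    obtain m' where m': "m' \<in> M" "y = comm_map g m'" using y by blast
    obtain u where u: "u \<in> M" "u [^] n = m'" using M_divisible m' n by blast
    have "comm_map g u [^] n = y" using comm_map_pow[OF g u(1), of n] u(2) m'(2) by simp
    then show ?thesis using u by blast
  qed
qed

text \<open>The image of M under m \<mapsto> [m, g] is divisible, hence trivial or all of M; the second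
  alternative would put M into every term of the lower central series.\<close>

lemma M_central:
  assumes m: "m \<in> M" and g: "g \<in> carrier G"
  shows "m \<otimes> g = g \<otimes> m"
proof -
  have "\<forall>d\<in>comm_map g ` M. d = \<one>"
  proof (rule ccontr)
    assume "\<not> (\<forall>d\<in>comm_map g ` M. d = \<one>)"
    then have MD: "M \<subseteq> comm_map g ` M" using M_subset_comm_map_image[OF g] by blast
    have "M \<subseteq> (comm_map g ^^ n) ` M" for n
    proof (induct n)
      case (Suc n)
      have "(comm_map g ^^ Suc n) ` M = (comm_map g ^^ n) ` (comm_map g ` M)"
        unfolding funpow_Suc_right image_comp[symmetric] by (rule refl)
      then show ?case using Suc MD by blast
    qed simp
    moreover obtain n where "lower_central G n = {\<one>}" using nilpotent by blast
    moreover have "(comm_map g ^^ n) ` M \<subseteq> lower_central G n"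
      using comm_map_iter_lower_central g by blast
    ultimately have "M \<subseteq> {\<one>}" by blast
    then show False using exists_order_p by blast
  qed
  then have "commutator G m g = \<one>" using m unfolding comm_map_def by blast
  then show ?thesis using commutator_eq_one_iff m g M_carrier by blast
qed

end

section \<open>Symplectic families\<close>

text \<open>The situation once the bottom M is known to be central: of the quasi-cyclic structure only
  divisibility and the cyclicity of the socle, generated by a, are retained.\<close>

locale chernikov_class_two = central_commutators G M for G (structure) and M +
  fixes p a
  assumes prime_p: "Factorial_Ring.prime (p::nat)"
    and subgroup_M: "subgroup M G"
    and M_divisible: "\<forall>x\<in>M. \<forall>n::nat. n > 0 \<longrightarrow> (\<exists>y\<in>M. y [^] n = x)"
    and pow_p_in_M: "\<And>x. x \<in> carrier G \<Longrightarrow> x [^] p \<in> M"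
    and finite_cosets: "finite {M #> x | x. x \<in> carrier G}"
    and a_in_M: "a \<in> M" and a_pow_p: "a [^] p = \<one>" and a_neq_one: "a \<noteq> \<one>"
    and Omega_1_powers: "\<And>m. m \<in> M \<Longrightarrow> m [^] p = \<one> \<Longrightarrow> \<exists>t<p. m = a [^] t"
begin

lemma p_gt_1: "1 < p"
  using prime_p prime_gt_1_nat by blast

lemma M_carrier: "m \<in> M \<Longrightarrow> m \<in> carrier G"
  by (rule subgroup.mem_carrier[OF subgroup_M])

lemma a_carrier: "a \<in> carrier G"
  using a_in_M M_carrier by blast

lemma finite_cosets_subset: "S \<subseteq> carrier G \<Longrightarrow> finite {M #> s | s. s \<in> S}"
  by (rule finite_subset[OF _ finite_cosets]) blast

lemma ord_a: "ord a = p"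
proof -
  have "ord a dvd p" using pow_eq_id[OF a_carrier] a_pow_p by blast
  moreover have "ord a \<noteq> 1" using ord_eq_1[OF a_carrier] a_neq_one by simp
  ultimately show ?thesis using prime_p by (metis prime_nat_iff)
qed

lemma a_pow_eq_one_iff: "a [^] (t::nat) = \<one> \<longleftrightarrow> p dvd t"
  using pow_eq_id[OF a_carrier] ord_a by simp

lemma a_pow_eq_one_less: "a [^] (t::nat) = \<one> \<Longrightarrow> t < p \<Longrightarrow> t = 0"
  using a_pow_eq_one_iff by (auto dest: dvd_imp_le)

text \<open>Commutators are central and x^p \<in> M, so [x,y]^p = [x,y^p] = 1.\<close>

lemma commutator_power_of_a:
  assumes x: "x \<in> carrier G" and y: "y \<in> carrier G"
  shows "\<exists>t<p. cm x y = a [^] t"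
proof -
  have "cm x y [^] p = cm x (y [^] p)" using commutator_pow_right[OF x y] by simp
  also have "\<dots> = \<one>" using commutator_centre_right[OF pow_p_in_M[OF y] x] .
  finally show ?thesis using Omega_1_powers[OF commutator_in_centre[OF x y]] by blast
qed

lemma exists_order_p_translate:
  assumes x: "x \<in> carrier G"
  shows "\<exists>m\<in>M. (x \<otimes> m) [^] p = \<one>"
proof -
  have "inv (x [^] p) \<in> M" by (rule subgroup.m_inv_closed[OF subgroup_M pow_p_in_M[OF x]])
  then have "\<exists>m\<in>M. m [^] p = inv (x [^] p)" using M_divisible p_gt_1 by simp
  then obtain m where m: "m \<in> M" "m [^] p = inv (x [^] p)" by blast
  have "(x \<otimes> m) [^] p = x [^] p \<otimes> m [^] p"
    using pow_mult_distrib[of x m p] central[OF m(1) x] x M_carrier[OF m(1)] by simp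
  then show ?thesis using m x by auto
qed

lemma normalizes_supergroup:
  assumes S: "subgroup S G" "M \<subseteq> S" and x: "x \<in> carrier G"
  shows "normalizes x S"
  unfolding normalizes_def
proof
  fix s assume s: "s \<in> S"
  have sc: "s \<in> carrier G" by (rule subgroup.mem_carrier[OF S(1) s])
  have "x \<otimes> s \<otimes> inv x = cm x s \<otimes> s"
    using mult_commute_commutator[OF x sc] x sc by (simp add: m_assoc)
  moreover have "inv x \<otimes> s \<otimes> x = cm (inv x) s \<otimes> s"
    using mult_commute_commutator[OF inv_closed[OF x] sc] x sc by (simp add: m_assoc)
  moreover have "cm x s \<in> S" "cm (inv x) s \<in> S"
    using commutator_in_centre[OF x sc] commutator_in_centre[OF inv_closed[OF x] sc] S(2) by auto
  ultimately show "x \<otimes> s \<otimes> inv x \<in> S \<and> inv x \<otimes> s \<otimes> x \<in> S"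
    using subgroup.m_closed[OF S(1) _ s] by simp
qed

lemma generate_insert_supergroup:
  assumes S: "subgroup S G" "M \<subseteq> S" and x: "x \<in> carrier G"
  shows "generate G (S \<union> {x}) = {s \<otimes> x [^] j | s j. s \<in> S \<and> j < p}"
  using pow_p_in_M[OF x] S
  by (intro generate_insert_normalizing[OF S(1) x p_gt_1 _ normalizes_supergroup[OF S x]]) blast

lemma hyperbolic_pair:
  assumes S: "subgroup S G" "M \<subseteq> S" and x0: "x0 \<in> S" and y0: "y0 \<in> S"
    and nc: "x0 \<otimes> y0 \<noteq> y0 \<otimes> x0"
  shows "\<exists>x\<in>S. \<exists>y\<in>S. x [^] p = \<one> \<and> y [^] p = \<one> \<and> cm x y = a"
proof -
  have x0c: "x0 \<in> carrier G" and y0c: "y0 \<in> carrier G" using subgroup.mem_carrier[OF S(1)] x0 y0 by auto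
  obtain t where t: "t < p" "cm x0 y0 = a [^] t" using commutator_power_of_a[OF x0c y0c] by blast
  have "t \<noteq> 0" using t nc commutator_eq_one_iff[OF x0c y0c] by (metis nat_pow_0)
  then have "\<not> p dvd t" using t by (metis dvd_imp_le not_le neq0_conv)
  then have "gcd t p = 1" using prime_p by (simp add: prime_imp_coprime coprime_commute)
  then obtain u v where uv: "t * u = p * v + 1" using bezout_nat[of t p] \<open>t \<noteq> 0\<close> by auto
  define y1 where "y1 = y0 [^] u"
  have y1S: "y1 \<in> S" unfolding y1_def by (rule subgroup_nat_pow_closed[OF S(1) y0])
  have y1c: "y1 \<in> carrier G" unfolding y1_def using y0c by simp
  have "cm x0 y1 = a [^] (p * v + 1)"
    unfolding y1_def using commutator_pow_right[OF x0c y0c] t a_carrier by (simp add: nat_pow_pow uv)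
  also have "\<dots> = (a [^] p) [^] v \<otimes> a" using a_carrier by (simp add: nat_pow_mult nat_pow_pow)
  finally have cxy1: "cm x0 y1 = a" using a_pow_p a_carrier by simp
  obtain m1 where m1: "m1 \<in> M" "(x0 \<otimes> m1) [^] p = \<one>" using exists_order_p_translate[OF x0c] by blast
  obtain m2 where m2: "m2 \<in> M" "(y1 \<otimes> m2) [^] p = \<one>" using exists_order_p_translate[OF y1c] by blast
  have m1c: "m1 \<in> carrier G" and m2c: "m2 \<in> carrier G" using m1 m2 M_carrier by auto
  have "cm (x0 \<otimes> m1) (y1 \<otimes> m2) = cm x0 (y1 \<otimes> m2) \<otimes> cm m1 (y1 \<otimes> m2)"
    using commutator_mult_left x0c m1c y1c m2c by simp
  also have "\<dots> = cm x0 y1 \<otimes> cm x0 m2 \<otimes> cm m1 (y1 \<otimes> m2)"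
    using commutator_mult_right x0c y1c m2c by simp
  also have "\<dots> = a"
    using cxy1 commutator_centre_right[OF m2(1) x0c] commutator_centre_left[OF m1(1), of "y1 \<otimes> m2"]
      y1c m2c a_carrier by simp
  finally have "cm (x0 \<otimes> m1) (y1 \<otimes> m2) = a" .
  moreover have "x0 \<otimes> m1 \<in> S" "y1 \<otimes> m2 \<in> S"
    using subgroup.m_closed[OF S(1)] x0 y1S m1 m2 S(2) by auto
  ultimately show ?thesis using m1 m2 by blast
qed

text \<open>The exponents are chosen to cancel the powers of a in [x,s] and [y,s].\<close>

lemma commuting_correction:
  assumes x: "x \<in> carrier G" and y: "y \<in> carrier G" and xy: "cm x y = a" and s: "s \<in> carrier G"
  shows "\<exists>(i::nat) (j::nat). (s \<otimes> y [^] j \<otimes> x [^] i) \<otimes> x = x \<otimes> (s \<otimes> y [^] j \<otimes> x [^] i)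
     \<and> (s \<otimes> y [^] j \<otimes> x [^] i) \<otimes> y = y \<otimes> (s \<otimes> y [^] j \<otimes> x [^] i)"
proof -
  obtain ua where ua: "ua < p" "cm x s = a [^] ua" using commutator_power_of_a[OF x s] by blast
  obtain ub where ub: "ub < p" "cm y s = a [^] ub" using commutator_power_of_a[OF y s] by blast
  define c where "c = s \<otimes> y [^] (p - ua) \<otimes> x [^] ub"
  have cc: "c \<in> carrier G" unfolding c_def using s x y by simp
  have "cm x c = a [^] ua \<otimes> a [^] (p - ua)"
    unfolding c_def using s x y ua xy commutator_pow_right[OF x y] commutator_pow_right[OF x x]
      commutator_self[OF x] a_carrier by (simp add: commutator_mult_right)
  also have "\<dots> = \<one>" using ua a_carrier a_pow_p by (simp add: nat_pow_mult)
  finally have "cm x c = \<one>" .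
  moreover have "cm y c = a [^] ub \<otimes> inv a [^] ub"
    unfolding c_def using s x y ub xy commutator_pow_right[OF y y] commutator_pow_right[OF y x]
      commutator_self[OF y] commutator_swap[OF x y] a_carrier by (simp add: commutator_mult_right)
  then have "cm y c = \<one>" using a_carrier by (simp add: pow_mult_distrib[symmetric])
  ultimately have "c \<otimes> x = x \<otimes> c" "c \<otimes> y = y \<otimes> c"
    using commutator_eq_one_iff[OF x cc] commutator_eq_one_iff[OF y cc] by simp_all
  then show ?thesis unfolding c_def by blast
qed

definition symplectic :: "'a set \<Rightarrow> nat \<Rightarrow> (nat \<Rightarrow> 'a) \<Rightarrow> bool" where
  "symplectic S k h \<longleftrightarrow> (\<forall>i\<in>{1..2*k}. h i \<in> S \<and> h i [^] p = \<one> \<and> h i \<notin> M)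
     \<and> (\<forall>i\<in>{1..2*k}. \<forall>j\<in>{1..2*k}. i < j \<longrightarrow> cm (h i) (h j) = (if j = k + i then a else \<one>))"

definition symplectic_span :: "nat \<Rightarrow> (nat \<Rightarrow> 'a) \<Rightarrow> 'a set" where
  "symplectic_span k h = generate G (M \<union> h ` {1..2*k})"

definition symplectic_centralizer :: "'a set \<Rightarrow> nat \<Rightarrow> (nat \<Rightarrow> 'a) \<Rightarrow> 'a set" where
  "symplectic_centralizer S k h = S \<inter> centralizer G (h ` {1..2*k})"

definition symplectic_decomposition :: "'a set \<Rightarrow> nat \<Rightarrow> (nat \<Rightarrow> 'a) \<Rightarrow> bool" where
  "symplectic_decomposition S k h \<longleftrightarrow> symplectic S k h
     \<and> (\<forall>s\<in>S. \<exists>u\<in>symplectic_span k h. \<exists>c\<in>symplectic_centralizer S k h. s = u \<otimes> c)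
     \<and> (\<forall>u\<in>symplectic_centralizer S k h. \<forall>v\<in>symplectic_centralizer S k h. u \<otimes> v = v \<otimes> u)
     \<and> symplectic_span k h \<inter> symplectic_centralizer S k h \<subseteq> M"

text \<open>The new pair (x, y) becomes (h 1, h (k+2)); the old h i moves to i+1 or i+2.\<close>

definition append_pair :: "nat \<Rightarrow> (nat \<Rightarrow> 'a) \<Rightarrow> 'a \<Rightarrow> 'a \<Rightarrow> nat \<Rightarrow> 'a" where
  "append_pair k h x y i =
     (if i = 1 then x else if i = k + 2 then y else if i \<le> k + 1 then h (i - 1) else h (i - 2))"

lemma mem_symplectic_centralizer:
  "c \<in> symplectic_centralizer S k h \<longleftrightarrow>
     c \<in> S \<and> c \<in> carrier G \<and> (\<forall>i\<in>{1..2*k}. c \<otimes> h i = h i \<otimes> c)"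
  unfolding symplectic_centralizer_def centralizer_def by auto

lemma append_pair_shift:
  assumes "i \<in> {1..2 * Suc k}" "i \<noteq> 1" "i \<noteq> k + 2"
  shows "append_pair k h x y i = h (if i \<le> k + 1 then i - 1 else i - 2)"
    and "(if i \<le> k + 1 then i - 1 else i - 2) \<in> {1..2*k}"
  using assms by (auto simp: append_pair_def)

lemma append_pair_image: "append_pair k h x y ` {1..2 * Suc k} = {x, y} \<union> h ` {1..2*k}"
proof
  show "append_pair k h x y ` {1..2 * Suc k} \<subseteq> {x, y} \<union> h ` {1..2*k}"
  proof
    fix z assume "z \<in> append_pair k h x y ` {1..2 * Suc k}"
    then obtain i where i: "i \<in> {1..2 * Suc k}" "z = append_pair k h x y i" by blast
    then show "z \<in> {x, y} \<union> h ` {1..2*k}"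
      using append_pair_shift[OF i(1)] by (cases "i = 1 \<or> i = k + 2") (auto simp: append_pair_def)
  qed
  have "h j \<in> append_pair k h x y ` {1..2 * Suc k}" if j: "j \<in> {1..2*k}" for j
  proof (cases "j \<le> k")
    case True
    then have "append_pair k h x y (j + 1) = h j" using j by (simp add: append_pair_def)
    then show ?thesis using j by (intro image_eqI[of _ _ "j + 1"]) auto
  next
    case False
    then have "append_pair k h x y (j + 2) = h j" using j by (simp add: append_pair_def)
    then show ?thesis using j by (intro image_eqI[of _ _ "j + 2"]) auto
  qed
  moreover have "append_pair k h x y 1 = x" "append_pair k h x y (k + 2) = y"
    by (simp_all add: append_pair_def)
  ultimately show "{x, y} \<union> h ` {1..2*k} \<subseteq> append_pair k h x y ` {1..2 * Suc k}"
    by (auto intro!: image_eqI[of x _ 1] image_eqI[of y _ "k + 2"])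
qed

lemma symplectic_carrier: "symplectic S k h \<Longrightarrow> S \<subseteq> carrier G \<Longrightarrow> h ` {1..2*k} \<subseteq> carrier G"
  unfolding symplectic_def by blast

lemma symplectic_ord:
  assumes hs: "symplectic S k h" and S: "S \<subseteq> carrier G" and i: "i \<in> {1..2*k}"
  shows "ord (h i) = p"
proof -
  have hc: "h i \<in> carrier G" and hp: "h i [^] p = \<one>" "h i \<notin> M"
    using hs S i unfolding symplectic_def by auto
  have "ord (h i) dvd p" using pow_eq_id[OF hc] hp by blast
  moreover have "ord (h i) \<noteq> 1" using ord_eq_1[OF hc] hp subgroup.one_closed[OF subgroup_M] by auto
  ultimately show ?thesis using prime_p by (metis prime_nat_iff)
qed

lemma append_pair_commutator:
  assumes rel: "\<And>i j. i \<in> {1..2*k} \<Longrightarrow> j \<in> {1..2*k} \<Longrightarrow> i < j \<Longrightarrow>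
                   cm (h i) (h j) = (if j = k + i then a else \<one>)"
    and xy: "cm x y = a"
    and hxy: "\<And>j. j \<in> {1..2*k} \<Longrightarrow> cm x (h j) = \<one> \<and> cm y (h j) = \<one> \<and> cm (h j) y = \<one>"
    and i: "i \<in> {1..2 * Suc k}" and j: "j \<in> {1..2 * Suc k}" and ij: "i < j"
  shows "cm (append_pair k h x y i) (append_pair k h x y j) = (if j = Suc k + i then a else \<one>)"
proof -
  define old where "old i = (if i \<le> k + 1 then i - 1 else i - 2)" for i :: nat
  have old: "append_pair k h x y i = h (old i)" "old i \<in> {1..2*k}"
    if "i \<in> {1..2 * Suc k}" "i \<noteq> 1" "i \<noteq> k + 2" for i
    using append_pair_shift[OF that] unfolding old_def by simp_all
  consider "i = 1" "j = k + 2" | "i = 1" "j \<noteq> k + 2" | "i = k + 2" | "i \<noteq> 1" "i \<noteq> k + 2" "j = k + 2"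
    | "i \<noteq> 1" "i \<noteq> k + 2" "j \<noteq> k + 2" by blast
  then show ?thesis
  proof cases
    case 1
    then show ?thesis using xy by (simp add: append_pair_def)
  next
    case 2
    then show ?thesis using old[OF j] hxy ij j by (simp add: append_pair_def)
  next
    case 3
    then show ?thesis using old[OF j] hxy ij j by (simp add: append_pair_def)
  next
    case 4
    then show ?thesis using old[OF i] hxy ij by (simp add: append_pair_def)
  next
    case 5
    have j1: "j \<noteq> 1" using i ij by auto
    have lt: "old i < old j" and eq: "old j = k + old i \<longleftrightarrow> j = Suc k + i"
      using 5 i j ij by (auto simp: old_def)
    have "cm (append_pair k h x y i) (append_pair k h x y j) = cm (h (old i)) (h (old j))"
      using old(1)[OF i 5(1,2)] old(1)[OF j j1 5(3)] by simp
    also have "\<dots> = (if old j = k + old i then a else \<one>)"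
      using rel[OF old(2)[OF i 5(1,2)] old(2)[OF j j1 5(3)] lt] .
    finally show ?thesis using eq by simp
  qed
qed

lemma symplectic_append_pair:
  assumes hs: "symplectic C0 k h" and C0S: "C0 \<subseteq> S" and C0c: "C0 \<subseteq> carrier G"
    and xS: "x \<in> S" and yS: "y \<in> S" and xp: "x [^] p = \<one>" and yp: "y [^] p = \<one>"
    and xy: "cm x y = a" and xc: "x \<in> carrier G" and yc: "y \<in> carrier G"
    and comm: "\<forall>c\<in>C0. c \<otimes> x = x \<otimes> c \<and> c \<otimes> y = y \<otimes> c"
  shows "symplectic S (Suc k) (append_pair k h x y)"
proof -
  have xM: "x \<notin> M" using commutator_centre_left[OF _ yc] xy a_neq_one by auto
  have yM: "y \<notin> M" using commutator_centre_right[OF _ xc] xy a_neq_one by auto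
  have hC0: "h j \<in> C0" "h j [^] p = \<one>" "h j \<notin> M" if "j \<in> {1..2*k}" for j
    using hs that unfolding symplectic_def by auto
  have "append_pair k h x y i \<in> S \<and> append_pair k h x y i [^] p = \<one> \<and> append_pair k h x y i \<notin> M"
    if "i \<in> {1..2 * Suc k}" for i
  proof -
    have "append_pair k h x y i \<in> {x, y} \<union> h ` {1..2*k}" using that append_pair_image by blast
    then consider "append_pair k h x y i = x" | "append_pair k h x y i = y"
      | j where "j \<in> {1..2*k}" "append_pair k h x y i = h j" by blast
    then show ?thesis
    proof cases
      case 3
      then show ?thesis using hC0[OF 3(1)] C0S by auto
    qed (use xS yS xp yp xM yM in simp_all)
  qed
  moreover have "cm (append_pair k h x y i) (append_pair k h x y j) = (if j = Suc k + i then a else \<one>)"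
    if "i \<in> {1..2 * Suc k}" "j \<in> {1..2 * Suc k}" "i < j" for i j
  proof (rule append_pair_commutator[OF _ xy _ that])
    show "cm (h i) (h j) = (if j = k + i then a else \<one>)"
      if "i \<in> {1..2*k}" "j \<in> {1..2*k}" "i < j" for i j
      using hs that unfolding symplectic_def by blast
    show "cm x (h j) = \<one> \<and> cm y (h j) = \<one> \<and> cm (h j) y = \<one>" if "j \<in> {1..2*k}" for j
      using comm hC0(1)[OF that] C0c xc yc
      by (auto simp: commutator_eq_one_iff)
  qed
  ultimately show ?thesis unfolding symplectic_def by blast
qed

lemma subgroup_symplectic_span:
  "symplectic S k h \<Longrightarrow> S \<subseteq> carrier G \<Longrightarrow> subgroup (symplectic_span k h) G"
  unfolding symplectic_span_def using centre_subset symplectic_carrier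
  by (intro generate_is_subgroup) blast

lemma M_subset_symplectic_span: "M \<subseteq> symplectic_span k h"
  unfolding symplectic_span_def by (auto intro: generate.incl)

lemma symplectic_span_commute:
  assumes hs: "symplectic S k h" and Sc: "S \<subseteq> carrier G" and c: "c \<in> carrier G"
    and ch: "\<forall>i\<in>{1..2*k}. c \<otimes> h i = h i \<otimes> c" and z: "z \<in> symplectic_span k h"
  shows "c \<otimes> z = z \<otimes> c"
proof (rule commute_generate[OF c _ _ z[unfolded symplectic_span_def]])
  show "M \<union> h ` {1..2*k} \<subseteq> carrier G" using centre_subset symplectic_carrier[OF hs Sc] by blast
  show "\<forall>w\<in>M \<union> h ` {1..2*k}. c \<otimes> w = w \<otimes> c" using central[OF _ c] ch by auto
qed

lemma subgroup_symplectic_centralizer: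
  assumes S: "subgroup S G" and hs: "symplectic S k h"
  shows "subgroup (symplectic_centralizer S k h) G"
  unfolding symplectic_centralizer_def
  using subgroup_centralizer[OF symplectic_carrier[OF hs subgroup.subset[OF S]]]
  by (rule subgroups_Inter_pair[OF S])

lemma M_subset_symplectic_centralizer:
  assumes "M \<subseteq> S" "symplectic S k h" "S \<subseteq> carrier G"
  shows "M \<subseteq> symplectic_centralizer S k h"
proof
  fix m assume m: "m \<in> M"
  have "\<forall>i\<in>{1..2*k}. m \<otimes> h i = h i \<otimes> m" using central[OF m] symplectic_carrier[OF assms(2,3)] by auto
  then show "m \<in> symplectic_centralizer S k h"
    using m assms(1) M_carrier by (simp add: mem_symplectic_centralizer subsetD)
qed

lemma symplectic_decomposition_abelian:
  assumes S: "subgroup S G" "M \<subseteq> S" and ab: "\<forall>u\<in>S. \<forall>v\<in>S. u \<otimes> v = v \<otimes> u"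
  shows "symplectic_decomposition S 0 h"
proof -
  have K: "symplectic_span 0 h = M"
    unfolding symplectic_span_def using generate_subgroup_eq[OF subgroup_M] by simp
  have C: "symplectic_centralizer S 0 h = S"
    unfolding symplectic_centralizer_def centralizer_def using subgroup.subset[OF S(1)] by auto
  have "\<exists>u\<in>M. \<exists>c\<in>S. s = u \<otimes> c" if "s \<in> S" for s
    using that subgroup.one_closed[OF subgroup_M] subgroup.mem_carrier[OF S(1)] by (metis l_one)
  then show ?thesis unfolding symplectic_decomposition_def symplectic_def K C using ab by auto
qed

lemma subgroup_pair_centralizer:
  "subgroup S G \<Longrightarrow> x \<in> carrier G \<Longrightarrow> y \<in> carrier G \<Longrightarrow> subgroup (S \<inter> centralizer G {x, y}) G"
  by (intro subgroups_Inter_pair subgroup_centralizer) auto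

lemma M_subset_pair_centralizer:
  "M \<subseteq> S \<Longrightarrow> x \<in> carrier G \<Longrightarrow> y \<in> carrier G \<Longrightarrow> M \<subseteq> S \<inter> centralizer G {x, y}"
  using central M_carrier by (auto simp: centralizer_def)

lemma card_cosets_pair_centralizer_less:
  assumes S: "subgroup S G" "M \<subseteq> S" and x: "x \<in> S" and y: "y \<in> S" and xy: "cm x y = a"
  shows "card {M #> s | s. s \<in> S \<inter> centralizer G {x, y}} < card {M #> s | s. s \<in> S}"
proof (rule psubset_card_mono)
  let ?C = "S \<inter> centralizer G {x, y}"
  have xc: "x \<in> carrier G" and yc: "y \<in> carrier G" using x y subgroup.mem_carrier[OF S(1)] by auto
  show "finite {M #> s | s. s \<in> S}" by (rule finite_cosets_subset[OF subgroup.subset[OF S(1)]])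
  have xC: "x \<notin> ?C" using xy a_neq_one commutator_eq_one_iff[OF xc yc] by (auto simp: centralizer_def)
  have "M #> x \<notin> {M #> s | s. s \<in> ?C}"
  proof
    assume "M #> x \<in> {M #> s | s. s \<in> ?C}"
    then obtain c where c: "c \<in> ?C" "M #> x = M #> c" by blast
    then have "x \<in> M #> c" using repr_independenceD[OF subgroup_M xc] by simp
    then obtain m where "m \<in> M" "x = m \<otimes> c" unfolding r_coset_def by blast
    then have "x \<in> ?C"
      using subgroup.m_closed[OF subgroup_pair_centralizer[OF S(1) xc yc]] M_subset_pair_centralizer[OF S(2) xc yc] c
      by blast
    then show False using xC by simp
  qed
  then show "{M #> s | s. s \<in> ?C} \<subset> {M #> s | s. s \<in> S}" using x by blast
qed

context
  fixes S x y k h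
  assumes S: "subgroup S G" "M \<subseteq> S"
    and x: "x \<in> S" "x [^] p = \<one>" and y: "y \<in> S" "y [^] p = \<one>" and xy: "cm x y = a"
    and dec: "symplectic_decomposition (S \<inter> centralizer G {x, y}) k h"
begin

lemma pair_carrier: "x \<in> carrier G" "y \<in> carrier G"
  using x y subgroup.mem_carrier[OF S(1)] by auto

lemma pair_centralizer_carrier: "S \<inter> centralizer G {x, y} \<subseteq> carrier G"
  using subgroup.subset[OF S(1)] by blast

lemma pair_centralizer_symplectic: "symplectic (S \<inter> centralizer G {x, y}) k h"
  using dec unfolding symplectic_decomposition_def by blast

lemma symplectic_span_subset_pair_centralizer: "symplectic_span k h \<subseteq> S \<inter> centralizer G {x, y}"
  unfolding symplectic_span_def
  using pair_centralizer_symplectic M_subset_pair_centralizer[OF S(2) pair_carrier]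
  by (intro generate_subgroup_incl subgroup_pair_centralizer[OF S(1) pair_carrier])
    (auto simp: symplectic_def)

lemma symplectic_append_hyperbolic_pair: "symplectic S (Suc k) (append_pair k h x y)"
  by (rule symplectic_append_pair[OF pair_centralizer_symplectic _ _ x(1) y(1) x(2) y(2) xy pair_carrier])
    (use subgroup.subset[OF S(1)] in \<open>auto simp: centralizer_def\<close>)

lemma symplectic_centralizer_append_pair:
  "symplectic_centralizer S (Suc k) (append_pair k h x y)
     = symplectic_centralizer (S \<inter> centralizer G {x, y}) k h"
  unfolding symplectic_centralizer_def append_pair_image by (auto simp: centralizer_def)

lemma symplectic_span_append_pair:
  "symplectic_span (Suc k) (append_pair k h x y)
     = {u \<otimes> x [^] i \<otimes> y [^] j | u i j. u \<in> symplectic_span k h \<and> i < p \<and> j < p}"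
proof -
  let ?K = "symplectic_span k h"
  let ?K1 = "generate G (?K \<union> {x})"
  have Kc: "M \<union> h ` {1..2*k} \<subseteq> carrier G"
    using centre_subset symplectic_carrier[OF pair_centralizer_symplectic pair_centralizer_carrier] by blast
  have K: "subgroup ?K G"
    unfolding symplectic_span_def by (rule generate_is_subgroup[OF Kc])
  have K1: "subgroup ?K1 G" "M \<subseteq> ?K1"
    using K M_subset_symplectic_span pair_carrier subgroup.subset[OF K]
    by (auto intro: generate_is_subgroup generate.incl)
  have K1_eq: "generate G ((M \<union> h ` {1..2*k}) \<union> {x}) = ?K1"
    unfolding symplectic_span_def using Kc pair_carrier by (intro generate_Un_generate[symmetric]) auto
  have "symplectic_span (Suc k) (append_pair k h x y) = generate G (((M \<union> h ` {1..2*k}) \<union> {x}) \<union> {y})"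
    unfolding symplectic_span_def append_pair_image by (metis Un_insert_left Un_insert_right insert_is_Un sup_commute)
  also have "\<dots> = generate G (?K1 \<union> {y})"
    using Kc pair_carrier K1_eq generate_Un_generate[of "(M \<union> h ` {1..2*k}) \<union> {x}" "{y}"] by simp
  also have "\<dots> = {u1 \<otimes> y [^] j | u1 j. u1 \<in> ?K1 \<and> j < p}"
    by (rule generate_insert_supergroup[OF K1 pair_carrier(2)])
  also have "\<dots> = {u \<otimes> x [^] i \<otimes> y [^] j | u i j. u \<in> ?K \<and> i < p \<and> j < p}"
    unfolding generate_insert_supergroup[OF K M_subset_symplectic_span pair_carrier(1)] by blast
  finally show ?thesis .
qed

lemma symplectic_span_append_pair_mult:
  assumes u: "u \<in> symplectic_span k h"
  shows "u \<otimes> (inv (x [^] (i::nat)) \<otimes> inv (y [^] (j::nat))) \<in> symplectic_span (Suc k) (append_pair k h x y)"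
proof -
  let ?K' = "symplectic_span (Suc k) (append_pair k h x y)"
  have K': "subgroup ?K' G"
    by (rule subgroup_symplectic_span[OF symplectic_append_hyperbolic_pair subgroup.subset[OF S(1)]])
  have "symplectic_span k h \<subseteq> ?K'"
    unfolding symplectic_span_def append_pair_image by (rule mono_generate) blast
  moreover have "x \<in> ?K'" "y \<in> ?K'"
    unfolding symplectic_span_def append_pair_image by (auto intro: generate.incl)
  ultimately show ?thesis using u K'
    by (simp add: subgroup.m_closed subgroup.m_inv_closed subgroup_nat_pow_closed subsetD)
qed

lemma symplectic_append_pair_decomposes:
  assumes s: "s \<in> S"
  shows "\<exists>u\<in>symplectic_span (Suc k) (append_pair k h x y).
           \<exists>c\<in>symplectic_centralizer S (Suc k) (append_pair k h x y). s = u \<otimes> c"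
proof -
  let ?C0 = "S \<inter> centralizer G {x, y}"
  have xc: "x \<in> carrier G" and yc: "y \<in> carrier G" and sc: "s \<in> carrier G"
    using pair_carrier s subgroup.mem_carrier[OF S(1)] by auto
  obtain i j where ij: "(s \<otimes> y [^] j \<otimes> x [^] (i::nat)) \<otimes> x = x \<otimes> (s \<otimes> y [^] (j::nat) \<otimes> x [^] i)"
      "(s \<otimes> y [^] j \<otimes> x [^] i) \<otimes> y = y \<otimes> (s \<otimes> y [^] j \<otimes> x [^] i)"
    using commuting_correction[OF xc yc xy sc] by blast
  define c' where "c' = s \<otimes> y [^] j \<otimes> x [^] i"
  have "c' \<in> S" unfolding c'_def
    using S(1) s x y by (simp add: subgroup.m_closed subgroup_nat_pow_closed)
  then have "c' \<in> ?C0" using ij xc yc sc unfolding c'_def by (auto simp: centralizer_def)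
  then obtain u c where uc: "u \<in> symplectic_span k h" "c \<in> symplectic_centralizer ?C0 k h" "c' = u \<otimes> c"
    using dec unfolding symplectic_decomposition_def by blast
  have uc_carrier: "u \<in> carrier G" "c \<in> carrier G" "c \<in> ?C0"
    using uc symplectic_span_subset_pair_centralizer pair_centralizer_carrier
    by (auto simp: mem_symplectic_centralizer)
  define w where "w = inv (x [^] i) \<otimes> inv (y [^] j)"
  have wc: "w \<in> carrier G" unfolding w_def using xc yc by simp
  have gen: "subgroup (generate G {x, y}) G" using xc yc by (intro generate_is_subgroup) auto
  have "x \<in> generate G {x, y}" "y \<in> generate G {x, y}" by (auto intro: generate.incl)
  then have w_gen: "w \<in> generate G {x, y}" unfolding w_def using gen
    by (simp add: subgroup.m_closed subgroup.m_inv_closed subgroup_nat_pow_closed)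
  have "\<forall>z\<in>{x, y}. c \<otimes> z = z \<otimes> c" using uc_carrier(3) by (simp add: centralizer_def)
  then have cw: "c \<otimes> w = w \<otimes> c"
    using commute_generate[OF uc_carrier(2) _ _ w_gen] xc yc by blast
  have "s = c' \<otimes> w" unfolding c'_def w_def using sc xc yc by (simp add: m_assoc)
  also have "\<dots> = u \<otimes> (c \<otimes> w)" using uc uc_carrier wc by (simp add: m_assoc)
  also have "\<dots> = (u \<otimes> w) \<otimes> c" using cw uc_carrier wc by (simp add: m_assoc)
  finally have "s = (u \<otimes> w) \<otimes> c" .
  moreover have "u \<otimes> w \<in> symplectic_span (Suc k) (append_pair k h x y)"
    unfolding w_def by (rule symplectic_span_append_pair_mult[OF uc(1)])
  moreover have "c \<in> symplectic_centralizer S (Suc k) (append_pair k h x y)"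
    using uc(2) symplectic_centralizer_append_pair by simp
  ultimately show ?thesis by blast
qed

text \<open>An element of the new span centralizing the new pair has trivial x- and y-exponents,
  because [x, x^i y^j] = a^j and [x^i y^j, y] = a^i.\<close>

lemma symplectic_append_pair_inter:
  "symplectic_span (Suc k) (append_pair k h x y) \<inter> symplectic_centralizer S (Suc k) (append_pair k h x y) \<subseteq> M"
proof
  fix z assume z: "z \<in> symplectic_span (Suc k) (append_pair k h x y)
    \<inter> symplectic_centralizer S (Suc k) (append_pair k h x y)"
  let ?C0 = "S \<inter> centralizer G {x, y}"
  have xc: "x \<in> carrier G" and yc: "y \<in> carrier G" using pair_carrier by auto
  have zC: "z \<in> symplectic_centralizer ?C0 k h" using z symplectic_centralizer_append_pair by simp
  obtain u i j where uij: "u \<in> symplectic_span k h" "i < p" "j < p" "z = u \<otimes> x [^] i \<otimes> y [^] j"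
    using z symplectic_span_append_pair by auto
  have uC0: "u \<in> ?C0" using uij(1) symplectic_span_subset_pair_centralizer by blast
  have uc: "u \<in> carrier G" using uC0 pair_centralizer_carrier by blast
  define v where "v = x [^] i \<otimes> y [^] j"
  have vc: "v \<in> carrier G" unfolding v_def using xc yc by simp
  have "v = inv u \<otimes> z" using uij(4) uc xc yc unfolding v_def by (simp add: m_assoc)
  moreover have "z \<in> ?C0" using zC by (simp add: mem_symplectic_centralizer)
  ultimately have "v \<in> ?C0" using uC0 subgroup_pair_centralizer[OF S(1) xc yc]
    by (metis subgroup.m_closed subgroup.m_inv_closed)
  then have vx: "v \<otimes> x = x \<otimes> v" and vy: "v \<otimes> y = y \<otimes> v" by (auto simp: centralizer_def)
  have "a [^] j = cm x v"
    unfolding v_def using xc yc xy a_carrier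
    by (simp add: commutator_mult_right commutator_pow_right commutator_self)
  then have j0: "j = 0" using vx commutator_eq_one_iff[OF xc vc] a_pow_eq_one_less uij(3) by simp
  have "a [^] i = cm v y"
    unfolding v_def using xc yc xy j0 by (simp add: commutator_pow_left)
  then have i0: "i = 0" using vy commutator_eq_one_iff[OF vc yc] a_pow_eq_one_less uij(2) by simp
  have "z \<in> symplectic_span k h \<inter> symplectic_centralizer ?C0 k h"
    using uij zC uc i0 j0 by simp
  then show "z \<in> M" using dec unfolding symplectic_decomposition_def by blast
qed

lemma symplectic_decomposition_append_pair:
  "symplectic_decomposition S (Suc k) (append_pair k h x y)"
  unfolding symplectic_decomposition_def
  using symplectic_append_hyperbolic_pair symplectic_append_pair_decomposes symplectic_append_pair_inter
    dec symplectic_centralizer_append_pair by (simp add: symplectic_decomposition_def)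

end

text \<open>Induction on the number of cosets of M: a non-abelian S yields a pair (x, y), and the
  centralizer of the pair in S has fewer cosets.\<close>

lemma symplectic_decomposition_exists:
  "subgroup S G \<Longrightarrow> M \<subseteq> S \<Longrightarrow> \<exists>k h. symplectic_decomposition S k h"
proof (induct "card {M #> s | s. s \<in> S}" arbitrary: S rule: less_induct)
  case less
  show ?case
  proof (cases "\<forall>u\<in>S. \<forall>v\<in>S. u \<otimes> v = v \<otimes> u")
    case True
    then show ?thesis using symplectic_decomposition_abelian[OF less.prems] by blast
  next
    case False
    then obtain x y where xy: "x \<in> S" "y \<in> S" "x [^] p = \<one>" "y [^] p = \<one>" "cm x y = a"
      using hyperbolic_pair[OF less.prems] by blast
    have xc: "x \<in> carrier G" and yc: "y \<in> carrier G" using xy subgroup.mem_carrier[OF less.prems(1)] by auto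
    obtain k h where "symplectic_decomposition (S \<inter> centralizer G {x, y}) k h"
      using less.hyps[OF card_cosets_pair_centralizer_less[OF less.prems xy(1,2,5)]
          subgroup_pair_centralizer[OF less.prems(1) xc yc] M_subset_pair_centralizer[OF less.prems(2) xc yc]]
      by blast
    then show ?thesis using symplectic_decomposition_append_pair[OF less.prems xy(1,3,2,4,5)] by blast
  qed
qed

section \<open>The elementary abelian complement\<close>

lemma normal_M: "M \<lhd> G"
proof -
  have "x \<otimes> m \<otimes> inv x = m" if "x \<in> carrier G" "m \<in> M" for x m
  proof -
    have "x \<otimes> m \<otimes> inv x = m \<otimes> x \<otimes> inv x" using central[OF that(2,1)] by simp
    also have "\<dots> = m" using M_carrier[OF that(2)] that(1) by (simp add: m_assoc)
    finally show ?thesis .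
  qed
  then show ?thesis unfolding normal_inv_iff using subgroup_M by simp
qed

primrec independent_mod_M :: "'a list \<Rightarrow> bool" where
  "independent_mod_M [] = True"
| "independent_mod_M (r # rs) = (r \<notin> generate G (M \<union> set rs) \<and> independent_mod_M rs)"

lemma generate_insert_translate:
  assumes T: "subgroup T G" "M \<subseteq> T" and m: "m \<in> M" and t: "t \<in> carrier G"
  shows "generate G (T \<union> {t \<otimes> m}) = generate G (T \<union> {t})"
proof -
  have mc: "m \<in> carrier G" using m M_carrier by blast
  have Tc: "T \<subseteq> carrier G" by (rule subgroup.subset[OF T(1)])
  have s1: "subgroup (generate G (T \<union> {t})) G" using Tc t by (intro generate_is_subgroup) auto
  have s2: "subgroup (generate G (T \<union> {t \<otimes> m})) G" using Tc t mc by (intro generate_is_subgroup) auto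
  have "t \<otimes> m \<in> generate G (T \<union> {t})"
    using subgroup.m_closed[OF s1] m T(2) by (auto intro: generate.incl)
  then have i1: "T \<union> {t \<otimes> m} \<subseteq> generate G (T \<union> {t})" by (auto intro: generate.incl)
  have "inv m \<in> generate G (T \<union> {t \<otimes> m})"
    using subgroup.m_inv_closed[OF T(1)] m T(2) by (auto intro: generate.incl)
  moreover have "t \<otimes> m \<in> generate G (T \<union> {t \<otimes> m})" by (auto intro: generate.incl)
  ultimately have "(t \<otimes> m) \<otimes> inv m \<in> generate G (T \<union> {t \<otimes> m})" by (rule subgroup.m_closed[OF s2, rotated])
  then have i2: "T \<union> {t} \<subseteq> generate G (T \<union> {t \<otimes> m})"
    using t mc by (auto simp: m_assoc intro: generate.incl)
  show ?thesis
    using generate_subgroup_incl[OF i1 s1] generate_subgroup_incl[OF i2 s2] by blast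
qed

lemma generate_M_Cons:
  "set L \<subseteq> carrier G \<Longrightarrow> t \<in> carrier G \<Longrightarrow>
     generate G (M \<union> set (t # L)) = generate G (generate G (M \<union> set L) \<union> {t})"
  using generate_Un_generate[of "M \<union> set L" "{t}"] centre_subset by (simp add: insert_commute)

lemma independent_translate:
  assumes rs: "set rs \<subseteq> carrier G" and t: "t \<in> carrier G" and tT: "t \<notin> generate G (M \<union> set rs)"
  obtains m where "m \<in> M" "(t \<otimes> m) [^] p = \<one>" "t \<otimes> m \<notin> generate G (M \<union> set rs)"
    "generate G (M \<union> set ((t \<otimes> m) # rs)) = generate G (M \<union> set (t # rs))"
proof -
  let ?T = "generate G (M \<union> set rs)"
  obtain m where m: "m \<in> M" "(t \<otimes> m) [^] p = \<one>" using exists_order_p_translate[OF t] by blast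
  have mc: "m \<in> carrier G" using m M_carrier by blast
  have Tsub: "subgroup ?T G" using rs centre_subset by (intro generate_is_subgroup) auto
  have MT: "M \<subseteq> ?T" by (auto intro: generate.incl)
  have "t \<otimes> m \<notin> ?T"
  proof
    assume "t \<otimes> m \<in> ?T"
    then have "t \<otimes> m \<otimes> inv m \<in> ?T"
      using subgroup.m_closed[OF Tsub] subgroup.m_inv_closed[OF Tsub] m MT by blast
    then show False using tT t mc by (simp add: m_assoc)
  qed
  moreover have "generate G (M \<union> set ((t \<otimes> m) # rs)) = generate G (M \<union> set (t # rs))"
    using generate_M_Cons[OF rs] generate_insert_translate[OF Tsub MT m(1) t] t mc by simp
  ultimately show ?thesis using that m by blast
qed

text \<open>Sift a list of generators over M: skip those already generated, and replace the others
  by a translate of order p.\<close>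

lemma independent_generators_list:
  assumes C: "subgroup C G" "M \<subseteq> C"
  shows "set L \<subseteq> C \<Longrightarrow> \<exists>rs. set rs \<subseteq> C \<and> (\<forall>r\<in>set rs. r [^] p = \<one>)
           \<and> generate G (M \<union> set rs) = generate G (M \<union> set L) \<and> independent_mod_M rs"
proof (induct L)
  case Nil
  then show ?case by (intro exI[of _ "[]"]) simp
next
  case (Cons t L)
  have Cc: "C \<subseteq> carrier G" by (rule subgroup.subset[OF C(1)])
  have tC: "t \<in> C" and tc: "t \<in> carrier G" and LC: "set L \<subseteq> C" using Cons.prems Cc by auto
  obtain rs where rs: "set rs \<subseteq> C" "\<forall>r\<in>set rs. r [^] p = \<one>"
      "generate G (M \<union> set rs) = generate G (M \<union> set L)" "independent_mod_M rs"
    using Cons.hyps[OF LC] by blast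
  let ?T = "generate G (M \<union> set rs)"
  have rsc: "set rs \<subseteq> carrier G" using rs(1) Cc by blast
  have eqL: "generate G (M \<union> set (t # L)) = generate G (M \<union> set (t # rs))"
    using generate_M_Cons[OF _ tc, of L] generate_M_Cons[OF rsc tc] LC Cc rs(3) by auto
  show ?case
  proof (cases "t \<in> ?T")
    case True
    have "subgroup ?T G" using rsc centre_subset by (intro generate_is_subgroup) auto
    then have "generate G (M \<union> set (t # rs)) = ?T"
      using True generate_M_Cons[OF rsc tc] generate_subgroup_eq by (simp add: insert_absorb)
    then show ?thesis using rs eqL by auto
  next
    case False
    then obtain m where m: "m \<in> M" "(t \<otimes> m) [^] p = \<one>" "t \<otimes> m \<notin> ?T"
        "generate G (M \<union> set ((t \<otimes> m) # rs)) = generate G (M \<union> set (t # rs))"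
      using independent_translate[OF rsc tc] by blast
    have "t \<otimes> m \<in> C" using subgroup.m_closed[OF C(1) tC] m C(2) by blast
    then show ?thesis using eqL rs m by (intro exI[of _ "(t \<otimes> m) # rs"]) auto
  qed
qed

lemma independent_generators:
  assumes C: "subgroup C G" "M \<subseteq> C"
  shows "\<exists>rs. set rs \<subseteq> C \<and> (\<forall>r\<in>set rs. r [^] p = \<one>) \<and> generate G (M \<union> set rs) = C
           \<and> independent_mod_M rs"
proof -
  have Cc: "C \<subseteq> carrier G" by (rule subgroup.subset[OF C(1)])
  define rep where "rep Q = (SOME c. c \<in> C \<and> Q = M #> c)" for Q
  have rep: "rep (M #> c) \<in> C \<and> M #> c = M #> rep (M #> c)" if "c \<in> C" for c
    unfolding rep_def by (rule someI_ex) (use that in blast)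
  have "finite (rep ` {M #> c | c. c \<in> C})" using finite_cosets_subset[OF Cc] by simp
  then obtain L where L: "set L = rep ` {M #> c | c. c \<in> C}" using finite_list by blast
  have LC: "set L \<subseteq> C" unfolding L using rep by blast
  have MLc: "M \<union> set L \<subseteq> carrier G" using centre_subset LC Cc by blast
  have "C \<subseteq> generate G (M \<union> set L)"
  proof
    fix c assume c: "c \<in> C"
    have "c \<in> M #> rep (M #> c)" using rep[OF c] rcos_self[OF _ subgroup_M] c Cc by auto
    then obtain m where m: "m \<in> M" "c = m \<otimes> rep (M #> c)" unfolding r_coset_def by blast
    have "rep (M #> c) \<in> set L" unfolding L using c by blast
    then have "m \<in> generate G (M \<union> set L)" "rep (M #> c) \<in> generate G (M \<union> set L)"
      using m(1) by (auto intro: generate.incl)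
    then have "m \<otimes> rep (M #> c) \<in> generate G (M \<union> set L)"
      by (rule subgroup.m_closed[OF generate_is_subgroup[OF MLc]])
    then show "c \<in> generate G (M \<union> set L)" using m(2) by simp
  qed
  moreover have "generate G (M \<union> set L) \<subseteq> C"
    using generate_subgroup_incl[of "M \<union> set L" C] C LC by blast
  ultimately have "generate G (M \<union> set L) = C" by blast
  then show ?thesis using independent_generators_list[OF C LC] by simp
qed

lemma generate_independent:
  assumes C: "subgroup C G" and ab: "\<forall>u\<in>C. \<forall>v\<in>C. u \<otimes> v = v \<otimes> u"
  shows "set rs \<subseteq> C \<Longrightarrow> \<forall>r\<in>set rs. r [^] p = \<one> \<Longrightarrow> independent_mod_M rs \<Longrightarrow>
     finite (generate G (set rs)) \<and> card (generate G (set rs)) = p ^ length rs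
     \<and> M \<inter> generate G (set rs) \<subseteq> {\<one>}"
proof (induct rs)
  case Nil
  then show ?case using generate_empty by simp
next
  case (Cons r rs)
  have Cc: "C \<subseteq> carrier G" by (rule subgroup.subset[OF C])
  have rC: "r \<in> C" and rsC: "set rs \<subseteq> C" and rp: "r [^] p = \<one>" using Cons.prems by auto
  have rc: "r \<in> carrier G" using rC Cc by blast
  have IH: "finite (generate G (set rs))" "card (generate G (set rs)) = p ^ length rs"
      "M \<inter> generate G (set rs) \<subseteq> {\<one>}"
    using Cons.hyps Cons.prems by auto
  define H where "H = generate G (set rs)"
  define T where "T = generate G (M \<union> set rs)"
  have rsc: "set rs \<subseteq> carrier G" using rsC Cc by blast
  have Hsub: "subgroup H G" unfolding H_def by (rule generate_is_subgroup[OF rsc])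
  have HC: "H \<subseteq> C" unfolding H_def by (rule generate_subgroup_incl[OF rsC C])
  have Tsub: "subgroup T G" unfolding T_def using centre_subset rsc by (intro generate_is_subgroup) auto
  have HT: "H \<subseteq> T" unfolding H_def T_def by (rule mono_generate) blast
  have MT: "M \<subseteq> T" unfolding T_def by (auto intro: generate.incl)
  have rT: "r \<notin> T" using Cons.prems unfolding T_def by simp
  have eq: "generate G (set (r # rs)) = generate G (H \<union> {r})"
    unfolding H_def using generate_Un_generate[OF rsc, of "{r}"] rc by (simp add: insert_commute)
  have norm: "normalizes r H"
    using normalizes_commuting[OF rc subgroup.subset[OF Hsub]] ab rC HC by blast
  have rpH: "r [^] p \<in> H" using rp subgroup.one_closed[OF Hsub] by simp
  have card: "finite (generate G (H \<union> {r}))" "card (generate G (H \<union> {r})) = p * card H"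
    using card_generate_insert_normalizing[OF Hsub rc prime_p rpH norm] rT HT IH(1) H_def by auto
  have "M \<inter> generate G (H \<union> {r}) \<subseteq> M \<inter> H"
    using generate_insert_normalizing_inter[OF Hsub Tsub HT rc rT prime_p rpH norm] MT by blast
  then show ?case using card IH eq H_def by auto
qed

lemma generate_independent_exponent:
  assumes C: "subgroup C G" and ab: "\<forall>u\<in>C. \<forall>v\<in>C. u \<otimes> v = v \<otimes> u"
    and rsC: "set rs \<subseteq> C" and rp: "\<forall>r\<in>set rs. r [^] p = \<one>"
    and y: "y \<in> generate G (set rs)"
  shows "y [^] p = \<one>"
  using y
proof (induct rule: generate.induct)
  case one
  then show ?case by simp
next
  case (incl h)
  then show ?case using rp by simp
next
  case (inv h)
  have "h \<in> carrier G" using inv rsC subgroup.subset[OF C] by blast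
  then show ?case using rp inv nat_pow_inv by simp
next
  case (eng h1 h2)
  have h12: "h1 \<in> C" "h2 \<in> C" using eng generate_subgroup_incl[OF rsC C] by auto
  then have "h1 \<in> carrier G" "h2 \<in> carrier G" "h1 \<otimes> h2 = h2 \<otimes> h1"
    using ab subgroup.subset[OF C] by auto
  then show ?case using eng pow_mult_distrib by simp
qed

lemma is_G_k_symplectic_span:
  assumes Mqc: "G\<lparr>carrier := M\<rparr> \<cong> prufer_group p" and hs: "symplectic (carrier G) k h"
  shows "is_G_k p k (G\<lparr>carrier := symplectic_span k h\<rparr>)"
proof -
  let ?KS = "symplectic_span k h"
  let ?K = "G\<lparr>carrier := ?KS\<rparr>"
  have Ksub: "subgroup ?KS G" by (rule subgroup_symplectic_span[OF hs subset_refl])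
  have hK: "h i \<in> ?KS" if "i \<in> {1..2*k}" for i
    using that unfolding symplectic_span_def by (auto intro: generate.incl)
  have ordK: "group.ord ?K x = ord x" if "x \<in> ?KS" for x
    by (rule ord_subgroup[OF Ksub that])
  have "quasi_cyclic_subgroup p ?K M"
    unfolding quasi_cyclic_subgroup_def
    using subgroup_incl[OF subgroup_M Ksub M_subset_symplectic_span] Mqc by simp
  moreover have "a \<in> M \<and> group.ord ?K a = p"
    using a_in_M ordK M_subset_symplectic_span ord_a by auto
  moreover have "h i \<in> carrier ?K \<and> group.ord ?K (h i) = p \<and> (\<forall>m\<in>M. h i \<otimes>\<^bsub>?K\<^esub> m = m \<otimes>\<^bsub>?K\<^esub> h i)"
    if i: "i \<in> {1..2*k}" for i
  proof -
    have hc: "h i \<in> carrier G" using hs i unfolding symplectic_def by auto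
    then show ?thesis using hK[OF i] ordK[OF hK[OF i]] central[OF _ hc] symplectic_ord[OF hs subset_refl i]
      by simp
  qed
  moreover have "commutator ?K (h i) (h j) = (if j = k + i then a else \<one>\<^bsub>?K\<^esub>)"
    if ij: "i \<in> {1..2*k}" "j \<in> {1..2*k}" "i < j" for i j
  proof -
    have "commutator ?K (h i) (h j) = cm (h i) (h j)"
      unfolding commutator_def using m_inv_consistent[OF Ksub] hK ij by simp
    then show ?thesis using hs ij unfolding symplectic_def by simp
  qed
  moreover have "carrier ?K = generate ?K (M \<union> h ` {1..2*k})"
  proof -
    have "M \<union> h ` {1..2*k} \<subseteq> ?KS" using M_subset_symplectic_span hK by blast
    then have "generate ?K (M \<union> h ` {1..2*k}) = generate G (M \<union> h ` {1..2*k})"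
      by (rule generate_consistent[OF _ Ksub])
    then show ?thesis unfolding symplectic_span_def by simp
  qed
  ultimately show ?thesis
    unfolding is_G_k_def using subgroup_imp_group[OF Ksub] by blast
qed

lemma elementary_abelian_rank_independent:
  assumes C: "subgroup C G" and ab: "\<forall>u\<in>C. \<forall>v\<in>C. u \<otimes> v = v \<otimes> u"
    and rs: "set rs \<subseteq> C" "\<forall>r\<in>set rs. r [^] p = \<one>" "independent_mod_M rs"
  shows "elementary_abelian_rank p (length rs) (G\<lparr>carrier := generate G (set rs)\<rparr>)"
proof -
  let ?HS = "generate G (set rs)"
  let ?H = "G\<lparr>carrier := ?HS\<rparr>"
  have HC: "?HS \<subseteq> C" by (rule generate_subgroup_incl[OF rs(1) C])
  have Hsub: "subgroup ?HS G" using rs(1) subgroup.subset[OF C] by (intro generate_is_subgroup) auto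
  have "comm_group ?H"
    using ab HC by (intro group.group_comm_groupI[OF subgroup_imp_group[OF Hsub]]) auto
  moreover have "\<forall>x\<in>carrier ?H. x [^]\<^bsub>?H\<^esub> p = \<one>\<^bsub>?H\<^esub>"
    using generate_independent_exponent[OF C ab rs(1,2)] nat_pow_consistent by simp
  moreover have "finite (carrier ?H)" "card (carrier ?H) = p ^ length rs"
    using generate_independent[OF C ab rs] by simp_all
  ultimately show ?thesis
    unfolding elementary_abelian_rank_def elementary_abelian_def by blast
qed

lemma generate_M_Un_subset_set_mult:
  assumes "set rs \<subseteq> carrier G"
  shows "generate G (M \<union> set rs) \<subseteq> M <#> generate G (set rs)"
proof (rule generate_subgroup_incl)
  interpret second_isomorphism_grp M G "generate G (set rs)"
    using normal_M generate_is_subgroup[OF assms] by (simp add: second_isomorphism_grp_def second_isomorphism_grp_axioms_def)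
  show "subgroup (M <#> generate G (set rs)) G" by (rule normal_set_mult_subgroup)
  show "M \<union> set rs \<subseteq> M <#> generate G (set rs)"
  proof
    fix z assume "z \<in> M \<union> set rs"
    then show "z \<in> M <#> generate G (set rs)"
    proof
      assume z: "z \<in> M"
      then have "z \<otimes> \<one> \<in> M <#> generate G (set rs)" unfolding set_mult_def using generate.one by blast
      then show ?thesis using z M_carrier by simp
    next
      assume z: "z \<in> set rs"
      then have "z \<in> generate G (set rs)" by (rule generate.incl)
      then have "\<one> \<otimes> z \<in> M <#> generate G (set rs)"
        unfolding set_mult_def using subgroup.one_closed[OF subgroup_M] by blast
      then show ?thesis using z assms by (simp add: subsetD)
    qed
  qed
qed

lemma symplectic_span_complement:
  assumes dec: "symplectic_decomposition (carrier G) k h"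
    and rs: "set rs \<subseteq> symplectic_centralizer (carrier G) k h"
      "generate G (M \<union> set rs) = symplectic_centralizer (carrier G) k h"
      "M \<inter> generate G (set rs) \<subseteq> {\<one>}"
  shows "symplectic_span k h \<inter> generate G (set rs) = {\<one>}"
    and "symplectic_span k h <#> generate G (set rs) = carrier G"
    and "\<forall>x\<in>symplectic_span k h. \<forall>y\<in>generate G (set rs). x \<otimes> y = y \<otimes> x"
proof -
  let ?K = "symplectic_span k h" and ?C = "symplectic_centralizer (carrier G) k h"
  let ?H = "generate G (set rs)"
  have hs: "symplectic (carrier G) k h" using dec unfolding symplectic_decomposition_def by blast
  have Ksub: "subgroup ?K G" by (rule subgroup_symplectic_span[OF hs subset_refl])
  have Csub: "subgroup ?C G" by (rule subgroup_symplectic_centralizer[OF subgroup_self hs])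
  have rsc: "set rs \<subseteq> carrier G" using rs(1) subgroup.subset[OF Csub] by blast
  have Hsub: "subgroup ?H G" by (rule generate_is_subgroup[OF rsc])
  have HC: "?H \<subseteq> ?C" by (rule generate_subgroup_incl[OF rs(1) Csub])
  have "?K \<inter> ?H \<subseteq> M" using dec HC unfolding symplectic_decomposition_def by blast
  then show "?K \<inter> ?H = {\<one>}"
    using rs(3) subgroup.one_closed[OF Ksub] subgroup.one_closed[OF Hsub] by auto
  show "?K <#> ?H = carrier G"
  proof
    show "?K <#> ?H \<subseteq> carrier G" using setmult_subset_G subgroup.subset Ksub Hsub by blast
    show "carrier G \<subseteq> ?K <#> ?H"
    proof
      fix s assume "s \<in> carrier G"
      then obtain u c where uc: "u \<in> ?K" "c \<in> ?C" "s = u \<otimes> c"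
        using dec unfolding symplectic_decomposition_def by blast
      then obtain m v where mv: "m \<in> M" "v \<in> ?H" "c = m \<otimes> v"
        using generate_M_Un_subset_set_mult[OF rsc] rs(2) unfolding set_mult_def by blast
      have "s = (u \<otimes> m) \<otimes> v"
        using uc mv M_carrier subgroup.mem_carrier[OF Ksub] subgroup.mem_carrier[OF Hsub] by (simp add: m_assoc)
      moreover have "u \<otimes> m \<in> ?K"
        using subgroup.m_closed[OF Ksub uc(1)] mv(1) M_subset_symplectic_span by blast
      ultimately show "s \<in> ?K <#> ?H" using mv(2) unfolding set_mult_def by blast
    qed
  qed
  show "\<forall>x\<in>?K. \<forall>y\<in>?H. x \<otimes> y = y \<otimes> x"
    using symplectic_span_commute[OF hs subset_refl] HC by (auto simp: mem_symplectic_centralizer)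
qed

theorem direct_decomposition:
  assumes Mqc: "G\<lparr>carrier := M\<rparr> \<cong> prufer_group p"
  shows "\<exists>k l KS HS. is_G_k p k (G\<lparr>carrier := KS\<rparr>) \<and> elementary_abelian_rank p l (G\<lparr>carrier := HS\<rparr>)
     \<and> G \<cong> G\<lparr>carrier := KS\<rparr> \<times>\<times> G\<lparr>carrier := HS\<rparr>"
proof -
  obtain k h where dec: "symplectic_decomposition (carrier G) k h"
    using symplectic_decomposition_exists[OF subgroup_self centre_subset] by blast
  then have hs: "symplectic (carrier G) k h" unfolding symplectic_decomposition_def by blast
  let ?C = "symplectic_centralizer (carrier G) k h"
  have Csub: "subgroup ?C G" by (rule subgroup_symplectic_centralizer[OF subgroup_self hs])
  have abC: "\<forall>u\<in>?C. \<forall>v\<in>?C. u \<otimes> v = v \<otimes> u" using dec unfolding symplectic_decomposition_def by blast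
  obtain rs where rs: "set rs \<subseteq> ?C" "\<forall>r\<in>set rs. r [^] p = \<one>" "generate G (M \<union> set rs) = ?C"
      "independent_mod_M rs"
    using independent_generators[OF Csub M_subset_symplectic_centralizer[OF centre_subset hs subset_refl]]
    by blast
  have "M \<inter> generate G (set rs) \<subseteq> {\<one>}" using generate_independent[OF Csub abC rs(1,2,4)] by blast
  note complement = symplectic_span_complement[OF dec rs(1,3) this]
  have "G \<cong> G\<lparr>carrier := symplectic_span k h\<rparr> \<times>\<times> G\<lparr>carrier := generate G (set rs)\<rparr>"
    using subgroup.subset[OF Csub] rs(1) complement
    by (intro iso_internal_direct_product subgroup_symplectic_span[OF hs subset_refl] generate_is_subgroup)
      auto
  then show ?thesis
    using is_G_k_symplectic_span[OF Mqc hs] elementary_abelian_rank_independent[OF Csub abC rs(1,2,4)] by blast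
qed

end

context group begin

lemma elementary_abelian_quotient:
  assumes N: "N \<lhd> G" and ea: "elementary_abelian p (G Mod N)"
  shows "\<And>x y. x \<in> carrier G \<Longrightarrow> y \<in> carrier G \<Longrightarrow> commutator G x y \<in> N"
    and "\<And>x. x \<in> carrier G \<Longrightarrow> x [^] p \<in> N"
    and "finite {N #> x | x. x \<in> carrier G}"
proof -
  interpret N: normal N G by (rule N)
  interpret Q: comm_group "G Mod N" using ea unfolding elementary_abelian_def by blast
  have cos: "N #> x \<in> carrier (G Mod N)" if "x \<in> carrier G" for x
    using that unfolding carrier_FactGroup by blast
  show "commutator G x y \<in> N" if x: "x \<in> carrier G" and y: "y \<in> carrier G" for x y
  proof -
    have "N #> (x \<otimes> y) = N #> (y \<otimes> x)"
      using Q.m_comm[OF cos[OF x] cos[OF y]] N.rcos_sum x y by simp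
    then have "(x \<otimes> y) \<otimes> inv (y \<otimes> x) \<in> N"
      using repr_independenceD[OF N.subgroup_axioms, of "x \<otimes> y" "y \<otimes> x"]
        N.rcos_module_imp[OF is_group, of "y \<otimes> x"] x y by simp
    moreover have "commutator G x y = (x \<otimes> y) \<otimes> inv (y \<otimes> x)"
      unfolding commutator_def using x y by (simp add: inv_mult_group m_assoc)
    ultimately show ?thesis by simp
  qed
  show "x [^] p \<in> N" if x: "x \<in> carrier G" for x
  proof -
    have "(N #> x) [^]\<^bsub>G Mod N\<^esub> p = N"
      using ea cos[OF x] unfolding elementary_abelian_def by simp
    then have "N #> (x [^] p) = N" using N.FactGroup_pow[OF x] by simp
    then show ?thesis using rcos_self[OF _ N.subgroup_axioms] x by (metis nat_pow_closed)
  qed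
  have "{N #> x | x. x \<in> carrier G} = carrier (G Mod N)" unfolding carrier_FactGroup by blast
  then show "finite {N #> x | x. x \<in> carrier G}" using ea unfolding elementary_abelian_def by simp
qed

lemma chernikov_class_two_of_bottom:
  assumes p: "Factorial_Ring.prime p" and nil: "nilpotent_group G" and N: "M \<lhd> G"
    and f: "f \<in> iso (G\<lparr>carrier := M\<rparr>) (prufer_group p)"
    and bottom: "is_bottom G M" and ea: "elementary_abelian p (G Mod M)"
  shows "\<exists>a. chernikov_class_two G M p a"
proof -
  have M: "subgroup M G" using N by (rule normal_imp_subgroup)
  have dab: "divisible_abelian_subgroup G M" using bottom unfolding is_bottom_def by blast
  have M_comm: "\<And>x y. x \<in> M \<Longrightarrow> y \<in> M \<Longrightarrow> x \<otimes> y = y \<otimes> x"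
    and M_div: "\<forall>x\<in>M. \<forall>n::nat. n > 0 \<longrightarrow> (\<exists>y\<in>M. y [^] n = x)"
    using dab unfolding divisible_abelian_subgroup_def by blast+
  have nil': "\<exists>n. lower_central G n = {\<one>}" using nil unfolding nilpotent_group_def by blast
  interpret prufer_subgroup G p M f
    using is_group p M f by (simp add: prufer_subgroup_def prufer_subgroup_axioms_def)
  interpret nilpotent_prufer G p M f
    using N M_comm M_div nil' prufer_subgroup_axioms
    by (simp add: nilpotent_prufer_def nilpotent_prufer_axioms_def)
  obtain a where a: "a \<in> M" "a [^] p = \<one>" "a \<noteq> \<one>" using exists_order_p by blast
  note quot = elementary_abelian_quotient[OF N ea]
  have "central_commutators G M"
    unfolding central_commutators_def central_commutators_axioms_def
    using is_group subgroup.subset[OF M] M_central quot(1) by blast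
  moreover have "chernikov_class_two_axioms G M p a"
    using p M M_div quot(2,3) a Omega_1_powers[OF a] by (simp add: chernikov_class_two_axioms_def)
  ultimately have "chernikov_class_two G M p a" by (simp add: chernikov_class_two_def)
  then show ?thesis by blast
qed

end

theorem proposition3p1:
  fixes G :: "'a monoid" and p :: nat and M :: "'a set"
  assumes "Factorial_Ring.prime p"
    and "group G"
    and "nilpotent_group G"
    and "M \<lhd> G"
    and "quasi_cyclic_subgroup p G M"
    and "is_bottom G M"
    and "elementary_abelian p (G Mod M)"
  shows "\<exists>k l. \<exists>(K :: 'a monoid) (H :: 'a monoid).
           is_G_k p k K \<and> elementary_abelian_rank p l H \<and> G \<cong> K \<times>\<times> H"
proof -
  have Mqc: "G\<lparr>carrier := M\<rparr> \<cong> prufer_group p"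
    using assms(5) unfolding quasi_cyclic_subgroup_def by blast
  then obtain f where "f \<in> iso (G\<lparr>carrier := M\<rparr>) (prufer_group p)" unfolding is_iso_def by blast
  then obtain a where "chernikov_class_two G M p a"
    using group.chernikov_class_two_of_bottom[OF assms(2,1,3,4) _ assms(6,7)] by blast
  then show ?thesis using chernikov_class_two.direct_decomposition[OF _ Mqc] by blast
qed

end
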